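(* Let $E$ be a Banach lattice. The following assertions are equivalent: (1) Each positive operator from $E$ into $\ell_1$ is uaw-Dunford–Pettis. (2) The norm of the dual Banach lattice $E'$ is order continuous.
   Context: All operators are continuous linear operators. A net $(x_\alpha)$ in a Banach lattice $E$ is uaw-convergent to $x$ (written $x_\alpha\xrightarrow{uaw}x$) if $|x_\alpha-x|\wedge u\to 0$ weakly for every $u\in E_+$. An operator $T$ from a Banach lattice $E$ into a Banach space $X$ is uaw-Dunford–Pettis if for every norm bounded sequence $(x_n)$ in $E$ with $x_n\xrightarrow{uaw}0$ one has $\|Tx_n\|\to 0$. *)

theory Defs
  imports "HOL-Analysis.Analysis"
begin

class banach_lattice = banach + ordered_real_vector + lattice +
  assumes lattice_norm: "sup x (- x) \<le> sup y (- y) \<Longrightarrow> norm x \<le> norm y"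

definition lmod :: "'a::banach_lattice \<Rightarrow> 'a" where
  "lmod x = sup x (- x)"

definition dual_le :: "('a::banach_lattice \<Rightarrow>\<^sub>L real) \<Rightarrow> ('a \<Rightarrow>\<^sub>L real) \<Rightarrow> bool" where
  "dual_le f g \<longleftrightarrow> (\<forall>x::'a. 0 \<le> x \<longrightarrow> blinfun_apply f x \<le> blinfun_apply g x)"

text \<open>Order continuity of the norm of E': whenever f_\<alpha> \<down> 0 in E'
  (a downward directed set with infimum 0), the norms tend to 0.\<close>
definition dual_norm_order_continuous :: "'a::banach_lattice itself \<Rightarrow> bool" where
  "dual_norm_order_continuous (_::'a itself) \<longleftrightarrow>
     (\<forall>D::('a \<Rightarrow>\<^sub>L real) set.
        D \<noteq> {} \<and>
        (\<forall>f\<in>D. \<forall>g\<in>D. \<exists>h\<in>D. dual_le h f \<and> dual_le h g) \<and>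
        (\<forall>f\<in>D. dual_le 0 f) \<and>
        (\<forall>h. (\<forall>f\<in>D. dual_le h f) \<longrightarrow> dual_le h 0)
        \<longrightarrow> (\<forall>e>0. \<exists>f\<in>D. norm f < e))"

definition uaw_null :: "(nat \<Rightarrow> 'a::banach_lattice) \<Rightarrow> bool" where
  "uaw_null x \<longleftrightarrow> (\<forall>u::'a. 0 \<le> u \<longrightarrow>
      (\<forall>f::'a \<Rightarrow>\<^sub>L real. (\<lambda>n. blinfun_apply f (inf (lmod (x n)) u)) \<longlonglongrightarrow> 0))"

text \<open>The space \<ell>_1 is represented by sequences nat \<Rightarrow> real with summable
  absolute values, with norm l1norm and coordinatewise order.\<close>
definition l1norm :: "(nat \<Rightarrow> real) \<Rightarrow> real" where
  "l1norm s = (\<Sum>n. \<bar>s n\<bar>)"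

definition l1_operator :: "('a::banach_lattice \<Rightarrow> nat \<Rightarrow> real) \<Rightarrow> bool" where
  "l1_operator T \<longleftrightarrow>
     (\<forall>x. summable (\<lambda>n. \<bar>T x n\<bar>)) \<and>
     (\<forall>x y. T (x + y) = (\<lambda>n. T x n + T y n)) \<and>
     (\<forall>c x. T (c *\<^sub>R x) = (\<lambda>n. c * T x n)) \<and>
     (\<exists>C. \<forall>x. l1norm (T x) \<le> C * norm x)"

definition positive_l1_operator :: "('a::banach_lattice \<Rightarrow> nat \<Rightarrow> real) \<Rightarrow> bool" where
  "positive_l1_operator T \<longleftrightarrow> l1_operator T \<and> (\<forall>x. 0 \<le> x \<longrightarrow> (\<forall>n. 0 \<le> T x n))"

definition uaw_DP_l1 :: "('a::banach_lattice \<Rightarrow> nat \<Rightarrow> real) \<Rightarrow> bool" where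
  "uaw_DP_l1 T \<longleftrightarrow> (\<forall>x::nat \<Rightarrow> 'a. bounded (range x) \<and> uaw_null x \<longrightarrow>
      (\<lambda>n. l1norm (T (x n))) \<longlonglongrightarrow> 0)"

end

theory Submission
  imports Defs "HOL-Library.Lattice_Algebras"
begin

text \<open>
  (2) \<Longrightarrow> (1): a positive T : E \<rightarrow> \<ell>_1 is dominated by the positive functional
  \<phi> = \<Sum>_n T(\<cdot>)_n, i.e. \<parallel>T x\<parallel> \<le> \<phi> |x|. If \<phi> |x_n| does not tend to 0 along a bounded
  uaw-null sequence, a subsequence y_j can be disjointified,
  z_j = (y_j - 4^j (y_0 + ... + y_{j-1}) - 2^{-j} \<Sum>_k 2^{-k} y_k)^+, without losing the mass
  of \<phi>, because uaw-nullity makes \<phi> (y_j \<sqinter> u) small for any fixed u. But when the norm of E'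
  is order continuous, positive functionals vanish along bounded disjoint sequences: the
  restrictions of \<phi> to the bands generated by the tails (z_n)_{n \<ge> N} decrease to 0 in E'.

  (1) \<Longrightarrow> (2): if f_\<alpha> \<down> 0 in E' while \<parallel>f_\<alpha>\<parallel> \<ge> e, pick a decreasing sequence F_n from
  the net and x_n \<ge> 0 in the unit ball with F_n x_n > e/2 and F_n (4^n (x_0 + ... + x_{n-1}))
  small, which is possible because f_\<alpha> \<down> 0 pointwise on the positive cone. The disjointified
  sequence z_n is bounded and uaw-null, yet the positive operator y \<mapsto> (F_n y - F_{n+1} y)_n
  into \<ell>_1 satisfies \<parallel>T z_n\<parallel> \<ge> F_n z_n - F_{n+1} z_n \<ge> e/2 - o(1).
\<close>

section \<open>Arithmetic in vector lattices\<close>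

subclass (in banach_lattice) lattice_ab_group_add ..

lemma member_le_sum_nonneg:
  fixes f :: "'i \<Rightarrow> 'a::ordered_comm_monoid_add"
  assumes "finite A" "i \<in> A" "\<And>x. x \<in> A \<Longrightarrow> 0 \<le> f x"
  shows "f i \<le> sum f A"
  using sum_mono2[of A "{i}" f] assms by simp

lemma inf_add_le_add_inf:
  fixes a b c :: "'a::lattice_ab_group_add"
  assumes "0 \<le> a" "0 \<le> b" "0 \<le> c"
  shows "inf (a + b) c \<le> inf a c + inf b c"
proof -
  let ?x = "inf (a + b) c"
  have "?x - inf a c = sup (?x - a) (?x - c)"
    by (simp add: diff_inf_eq_sup add_sup_distrib_left)
  also have "\<dots> \<le> b"
  proof (rule sup_least)
    have "?x \<le> a + b" by (rule inf_le1)
    then show "?x - a \<le> b" by (simp add: algebra_simps)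
    have "?x \<le> b + c" using assms(2) by (simp add: add_increasing le_infI2)
    then show "?x - c \<le> b" by (simp add: algebra_simps)
  qed
  finally have "?x - inf a c \<le> b" .
  moreover have "?x - inf a c \<le> c"
  proof -
    have "?x \<le> c + inf a c" using assms by (intro add_increasing2) auto
    then show ?thesis by (simp only: diff_le_eq)
  qed
  ultimately have "?x - inf a c \<le> inf b c" by (rule le_infI)
  then show ?thesis by (subst (asm) diff_le_eq) (simp add: add.commute)
qed

lemma inf_add_nonneg_le:
  fixes a b c :: "'a::lattice_ab_group_add"
  assumes "0 \<le> c"
  shows "inf a (b + c) \<le> inf a b + c"
proof -
  have "inf a (b + c) \<le> inf (a + c) (b + c)"
    using add_increasing2[OF assms order_refl, of a] by (intro inf_mono) simp_all
  also have "\<dots> = inf a b + c" by (rule add_inf_distrib_right[symmetric])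
  finally show ?thesis .
qed

lemma pprt_diff_eq_diff_inf: "pprt (a - w) = a - inf a (w::'a::lattice_ab_group_add)"
  by (simp add: pprt_def diff_inf_eq_sup add_sup_distrib_left sup_commute)

lemma pprt_decomp: "x = pprt x - pprt (- x::'a::lattice_ab_group_add)"
  using prts[of x] pprt_neg[of x] by simp

lemma inf_pprt_pprt_uminus: "inf (pprt x) (pprt (- x)) = (0::'a::lattice_ab_group_add)"
proof -
  have "pprt x + pprt (- x) = sup (x + pprt (- x)) (pprt (- x))"
    by (simp add: pprt_def add_sup_distrib_right)
  also have "x + pprt (- x) = sup 0 x"
    by (simp add: pprt_def add_sup_distrib_left)
  finally have "pprt x + pprt (- x) = sup (pprt x) (pprt (- x))"
    by (simp add: pprt_def sup_commute sup_left_commute)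
  with add_eq_inf_sup[of "pprt x" "pprt (- x)"] show ?thesis by simp
qed

lemma inf_sum_le_sum_inf:
  fixes a :: "'i \<Rightarrow> 'a::lattice_ab_group_add"
  assumes "finite I" "0 \<le> b" "\<And>i. i \<in> I \<Longrightarrow> 0 \<le> a i"
  shows "inf (sum a I) b \<le> (\<Sum>i\<in>I. inf (a i) b)"
  using assms
proof (induction I rule: finite_induct)
  case empty
  then show ?case by (simp add: inf_absorb1)
next
  case (insert i F)
  have "inf (a i + sum a F) b \<le> inf (a i) b + inf (sum a F) b"
    using insert by (intro inf_add_le_add_inf) (auto intro: sum_nonneg)
  also have "\<dots> \<le> inf (a i) b + (\<Sum>j\<in>F. inf (a j) b)"
    using insert by (intro add_left_mono) auto
  finally show ?case using insert by simp
qed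

lemma sum_le_if_disjoint:
  fixes a :: "'i \<Rightarrow> 'a::lattice_ab_group_add"
  assumes "finite I" "\<And>i j. i \<in> I \<Longrightarrow> j \<in> I \<Longrightarrow> i \<noteq> j \<Longrightarrow> inf (a i) (a j) = 0"
    "\<And>i. i \<in> I \<Longrightarrow> 0 \<le> a i" "\<And>i. i \<in> I \<Longrightarrow> a i \<le> u" "0 \<le> u"
  shows "sum a I \<le> u"
  using assms
proof (induction I rule: finite_induct)
  case empty
  then show ?case by simp
next
  case (insert i F)
  have "inf (sum a F) (a i) \<le> (\<Sum>j\<in>F. inf (a j) (a i))"
    using insert by (intro inf_sum_le_sum_inf) auto
  also have "\<dots> = 0" using insert by (intro sum.neutral) (metis insertCI)
  finally have "inf (sum a F) (a i) = 0"
    using insert by (intro order.antisym) (auto intro: sum_nonneg)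
  then have "sum a F + a i = sup (sum a F) (a i)" using add_eq_inf_sup[of "sum a F" "a i"] by simp
  also have "\<dots> \<le> u" using insert by auto
  finally show ?case using insert by (simp add: add.commute)
qed

lemma inf_sum_sum_eq_0_if_disjoint:
  fixes a :: "'i \<Rightarrow> 'a::lattice_ab_group_add"
  assumes "finite I" "finite J" "I \<inter> J = {}"
    "\<And>i j. i \<noteq> j \<Longrightarrow> inf (a i) (a j) = 0" "\<And>i. 0 \<le> a i"
  shows "inf (sum a I) (sum a J) = 0"
proof -
  have "inf (sum a I) (sum a J) \<le> (\<Sum>i\<in>I. inf (a i) (sum a J))"
    using assms by (intro inf_sum_le_sum_inf sum_nonneg) auto
  also have "\<dots> \<le> (\<Sum>i\<in>I. \<Sum>j\<in>J. inf (a j) (a i))"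
  proof (rule sum_mono)
    fix i
    have "inf (a i) (sum a J) = inf (sum a J) (a i)" by (rule inf_commute)
    also have "\<dots> \<le> (\<Sum>j\<in>J. inf (a j) (a i))" using assms by (intro inf_sum_le_sum_inf) auto
    finally show "inf (a i) (sum a J) \<le> (\<Sum>j\<in>J. inf (a j) (a i))" .
  qed
  also have "\<dots> = 0"
    using assms(3) by (intro sum.neutral ballI) (auto intro: assms(4))
  finally show ?thesis using assms by (intro order.antisym) (auto intro: sum_nonneg)
qed

lemma inf_add_inf_le_inf_add:
  fixes a b y :: "'a::lattice_ab_group_add"
  assumes "0 \<le> y" "0 \<le> a" "0 \<le> b" "inf a b = 0"
  shows "inf y a + inf y b \<le> inf y (a + b)"
proof -
  have "inf (inf y a) (inf y b) = 0"
    using assms inf_mono[of "inf y a" a "inf y b" b] by (intro order.antisym) auto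
  then have "inf y a + inf y b = sup (inf y a) (inf y b)"
    using add_eq_inf_sup[of "inf y a" "inf y b"] by simp
  also have "\<dots> \<le> inf y (a + b)"
    using assms by (auto intro: le_infI2 add_increasing add_increasing2)
  finally show ?thesis .
qed

lemma scaleR_inf_distrib:
  fixes a b :: "'a::{ordered_real_vector, lattice_ab_group_add}"
  assumes "0 \<le> t"
  shows "t *\<^sub>R inf a b = inf (t *\<^sub>R a) (t *\<^sub>R b)"
proof (cases "t = 0")
  case False
  with assms have t: "0 < t" by simp
  have "inverse t *\<^sub>R inf (t *\<^sub>R a) (t *\<^sub>R b) \<le> inf a b"
    using scaleR_left_mono[OF inf_le1[of "t *\<^sub>R a" "t *\<^sub>R b"], of "inverse t"]
      scaleR_left_mono[OF inf_le2[of "t *\<^sub>R a" "t *\<^sub>R b"], of "inverse t"] t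
    by simp
  from scaleR_left_mono[OF this, of t] t have "inf (t *\<^sub>R a) (t *\<^sub>R b) \<le> t *\<^sub>R inf a b"
    by simp
  moreover have "t *\<^sub>R inf a b \<le> inf (t *\<^sub>R a) (t *\<^sub>R b)"
    using assms by (auto intro: scaleR_left_mono)
  ultimately show ?thesis by simp
qed simp

lemma scaleR_pprt:
  fixes a :: "'a::{ordered_real_vector, lattice_ab_group_add}"
  assumes "0 \<le> t"
  shows "t *\<^sub>R pprt a = pprt (t *\<^sub>R a)"
  unfolding pprt_def
  by (simp only: sup_eq_neg_inf[of a 0] sup_eq_neg_inf[of "t *\<^sub>R a" 0] scaleR_minus_right
      scaleR_inf_distrib[OF assms] scaleR_zero_right)

lemma inf_scaleR_eq_0_if_disjoint:
  fixes a b :: "'a::{ordered_real_vector, lattice_ab_group_add}"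
  assumes "inf a b = 0" "0 \<le> a" "0 \<le> b" "0 \<le> s" "0 \<le> t"
  shows "inf (s *\<^sub>R a) (t *\<^sub>R b) = 0"
proof -
  have "inf (s *\<^sub>R a) (t *\<^sub>R b) \<le> inf (max s t *\<^sub>R a) (max s t *\<^sub>R b)"
    using assms by (intro inf_mono scaleR_right_mono) auto
  also have "\<dots> = 0" using assms by (simp flip: scaleR_inf_distrib)
  finally show ?thesis using assms by (intro order.antisym) (auto intro: scaleR_nonneg_nonneg)
qed

lemma inf_pprt_diff_scaleR_eq_0:
  fixes a b :: "'a::{ordered_real_vector, lattice_ab_group_add}"
  assumes "0 \<le> a" "0 \<le> b" "0 < l" "0 < m" "1 \<le> l * m"
  shows "inf (pprt (a - l *\<^sub>R b)) (pprt (b - m *\<^sub>R a)) = 0"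
proof -
  let ?c = "inf (pprt (a - l *\<^sub>R b)) (pprt (b - m *\<^sub>R a))"
  define k where "k = min 1 l"
  have k: "0 < k" "k \<le> 1" "k \<le> l" using assms unfolding k_def by auto
  have c0: "0 \<le> ?c" by simp
  have "k *\<^sub>R ?c \<le> ?c" using scaleR_right_mono[OF k(2) c0] by simp
  also have "?c \<le> pprt (a - l *\<^sub>R b)" by simp
  finally have 1: "k *\<^sub>R ?c \<le> pprt (a - l *\<^sub>R b)" .
  have "k *\<^sub>R ?c \<le> l *\<^sub>R ?c" using scaleR_right_mono[OF k(3) c0] .
  also have "\<dots> \<le> l *\<^sub>R pprt (b - m *\<^sub>R a)" using assms(3) by (intro scaleR_left_mono) auto
  also have "\<dots> = pprt (l *\<^sub>R b - (l * m) *\<^sub>R a)"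
    using assms by (simp add: scaleR_pprt scaleR_right_diff_distrib)
  also have "\<dots> \<le> pprt (- (a - l *\<^sub>R b))"
    using scaleR_right_mono[OF assms(5,1)] unfolding minus_diff_eq
    by (intro pprt_mono diff_left_mono) simp
  finally have 2: "k *\<^sub>R ?c \<le> pprt (- (a - l *\<^sub>R b))" .
  from le_infI[OF 1 2] have "k *\<^sub>R ?c \<le> 0" unfolding inf_pprt_pprt_uminus .
  then have "?c \<le> 0" using scaleR_le_cancel_left_pos[OF k(1), of ?c 0] by simp
  then show ?thesis using c0 by (rule order.antisym)
qed

section \<open>The modulus and the lattice norm\<close>

lemma lmod_nonneg: "0 \<le> lmod (x::'a::banach_lattice)"
proof -
  have "x + (- x) \<le> sup x (- x) + sup x (- x)" by (intro add_mono) auto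
  then show ?thesis unfolding lmod_def by simp
qed

lemma lmod_eq_self: "0 \<le> (x::'a::banach_lattice) \<Longrightarrow> lmod x = x"
  unfolding lmod_def by (rule sup_absorb1) (meson neg_le_0_iff_le order_trans)

lemma le_lmod: "(x::'a::banach_lattice) \<le> lmod x" and neg_le_lmod: "- x \<le> lmod x"
  unfolding lmod_def by auto

lemma lmod_least: "(x::'a::banach_lattice) \<le> y \<Longrightarrow> - x \<le> y \<Longrightarrow> lmod x \<le> y"
  unfolding lmod_def by simp

lemma norm_le_norm_if_lmod_le: "lmod (x::'a::banach_lattice) \<le> lmod y \<Longrightarrow> norm x \<le> norm y"
  using lattice_norm unfolding lmod_def by blast

lemma norm_lmod [simp]: "norm (lmod (x::'a::banach_lattice)) = norm x"
  using norm_le_norm_if_lmod_le[of "lmod x" x] norm_le_norm_if_lmod_le[of x "lmod x"]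
  by (simp add: lmod_eq_self lmod_nonneg)

lemma norm_le_if_lmod_le:
  assumes "lmod (x::'a::banach_lattice) \<le> y"
  shows "norm x \<le> norm y"
proof -
  have "0 \<le> y" using lmod_nonneg[of x] assms by (rule order_trans)
  then show ?thesis using assms norm_le_norm_if_lmod_le[of x y] by (simp add: lmod_eq_self)
qed

lemma norm_mono_nonneg: "0 \<le> (a::'a::banach_lattice) \<Longrightarrow> a \<le> b \<Longrightarrow> norm a \<le> norm b"
  by (simp add: lmod_eq_self norm_le_if_lmod_le)

lemma norm_pprt_le: "norm (pprt (x::'a::banach_lattice)) \<le> norm x"
  using norm_mono_nonneg[of "pprt x" "lmod x"] lmod_nonneg[of x] le_lmod[of x]
  by (simp add: pprt_def)

lemma lmod_add_le: "lmod ((x::'a::banach_lattice) + y) \<le> lmod x + lmod y"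
  using add_mono[OF le_lmod le_lmod, of x y] add_mono[OF neg_le_lmod neg_le_lmod, of x y]
  by (intro lmod_least) (simp_all add: algebra_simps)

lemma lmod_sum_le: "lmod (sum a I) \<le> (\<Sum>i\<in>I. lmod (a i :: 'a::banach_lattice))"
proof (induction I rule: infinite_finite_induct)
  case (insert i F)
  then show ?case by (simp add: order_trans[OF lmod_add_le] add_left_mono)
qed (simp_all add: lmod_eq_self)

lemma lmod_scaleR_le:
  fixes a :: "'a::banach_lattice"
  assumes "0 \<le> a" "\<bar>c\<bar> \<le> 1"
  shows "lmod (c *\<^sub>R a) \<le> a"
proof (rule lmod_least)
  show "c *\<^sub>R a \<le> a" using assms scaleR_right_mono[of c 1 a] by simp
  show "- (c *\<^sub>R a) \<le> a" using assms scaleR_right_mono[of "- c" 1 a] by simp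
qed

lemma lmod_inf_diff_le: "lmod (inf a c - inf b c) \<le> lmod ((a::'a::banach_lattice) - b)"
proof (rule lmod_least)
  have "inf a c \<le> inf (b + lmod (a - b)) c"
    using le_lmod[of "a - b"] by (intro inf_mono) (simp_all add: algebra_simps)
  also have "\<dots> \<le> inf b c + lmod (a - b)"
    using inf_add_nonneg_le[OF lmod_nonneg, of c b "a - b"] by (simp only: inf_commute)
  finally show "inf a c - inf b c \<le> lmod (a - b)" by (subst diff_le_eq) (simp add: add.commute)
  have "inf b c \<le> inf (a + lmod (a - b)) c"
    using neg_le_lmod[of "a - b"] by (intro inf_mono) (simp_all add: algebra_simps)
  also have "\<dots> \<le> inf a c + lmod (a - b)"
    using inf_add_nonneg_le[OF lmod_nonneg, of c a "a - b"] by (simp only: inf_commute)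
  finally show "- (inf a c - inf b c) \<le> lmod (a - b)"
    by (subst minus_diff_eq, subst diff_le_eq) (simp add: add.commute)
qed

lemma closed_nonneg_cone: "closed {x::'a::banach_lattice. 0 \<le> x}"
proof (rule closed_sequential_limits[THEN iffD2], intro allI impI, elim conjE)
  fix y :: "nat \<Rightarrow> 'a" and s
  assume pos: "\<forall>n. y n \<in> {x. 0 \<le> x}" and lim: "y \<longlonglongrightarrow> s"
  have "norm (inf s 0) \<le> norm (s - y n)" for n
    using pos lmod_inf_diff_le[of s 0 "y n"]
      by (intro norm_le_norm_if_lmod_le) (simp add: inf_absorb2)
  moreover have "(\<lambda>n. norm (s - y n)) \<longlonglongrightarrow> 0"
    using tendsto_norm_zero[OF LIM_zero[OF lim]] by (simp add: norm_minus_commute)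
  ultimately have "norm (inf s 0) \<le> 0"
    by (intro tendsto_le[OF trivial_limit_sequentially _ tendsto_const]) auto
  then have "inf s 0 = 0" by (simp only: norm_le_zero_iff)
  then show "s \<in> {x. 0 \<le> x}" by (simp add: inf.absorb_iff2)
qed

section \<open>Positive functionals\<close>

definition positive_functional :: "('a::banach_lattice \<Rightarrow>\<^sub>L real) \<Rightarrow> bool" where
  "positive_functional f \<longleftrightarrow> (\<forall>x. 0 \<le> x \<longrightarrow> 0 \<le> f x)"

lemma dual_le_0_iff: "dual_le 0 f \<longleftrightarrow> positive_functional f"
  by (simp add: positive_functional_def dual_le_def)

lemma dual_le_iff_positive_functional_diff: "dual_le g f \<longleftrightarrow> positive_functional (f - g)"
  by (simp add: positive_functional_def dual_le_def blinfun.diff_left)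

lemma dual_le_trans: "dual_le f g \<Longrightarrow> dual_le g h \<Longrightarrow> dual_le f h"
  unfolding dual_le_def by (meson order_trans)

lemma positive_functional_mono: "positive_functional f \<Longrightarrow> x \<le> y \<Longrightarrow> f x \<le> f y"
  unfolding positive_functional_def by (metis blinfun.diff_right diff_ge_0_iff_ge)

lemma positive_functional_abs_le: "positive_functional f \<Longrightarrow> \<bar>f x\<bar> \<le> f (lmod x)"
  using positive_functional_mono[of f x "lmod x"] positive_functional_mono[of f "- x" "lmod x"]
  by (simp add: le_lmod neg_le_lmod blinfun.minus_right)

lemma positive_functional_norm_approx:
  fixes f :: "'a::banach_lattice \<Rightarrow>\<^sub>L real"
  assumes f: "positive_functional f" and c: "c < norm f"
  obtains x where "0 \<le> x" "norm x \<le> 1" "c < f x"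
proof -
  have "\<exists>x. 0 \<le> x \<and> norm x \<le> 1 \<and> c < f x"
  proof (rule ccontr)
    assume "\<not> ?thesis"
    then have small: "f x \<le> c" if "0 \<le> x" "norm x \<le> 1" for x
      using that by force
    have "norm (f x) \<le> c * norm x" for x
    proof (cases "x = 0")
      case False
      define u where "u = (1 / norm x) *\<^sub>R lmod x"
      have "0 \<le> u" "norm u = 1"
        using False lmod_nonneg[of x] by (auto simp: u_def intro: scaleR_nonneg_nonneg)
      then have "f u \<le> c" by (intro small) simp_all
      then have "f (lmod x) / norm x \<le> c" by (simp add: u_def blinfun.scaleR_right)
      then have "f (lmod x) \<le> c * norm x" using False by (simp add: divide_le_eq)
      then show ?thesis using positive_functional_abs_le[OF f, of x] by simp
    qed simp
    then have "norm f \<le> c" using small[of 0] by (intro norm_blinfun_bound) auto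
    with c show False by simp
  qed
  then show ?thesis using that by blast
qed

text \<open>Kantorovich's extension of maps that are additive on the positive cone.\<close>

definition cone_extension :: "('a::banach_lattice \<Rightarrow> real) \<Rightarrow> 'a \<Rightarrow> real" where
  "cone_extension p x = p (pprt x) - p (pprt (- x))"

context
  fixes p :: "'a::banach_lattice \<Rightarrow> real"
  assumes add: "\<And>a b. 0 \<le> a \<Longrightarrow> 0 \<le> b \<Longrightarrow> p (a + b) = p a + p b"
begin

lemma cone_extension_diff:
  assumes "0 \<le> a" "0 \<le> b"
  shows "cone_extension p (a - b) = p a - p b"
proof -
  have "a + pprt (- (a - b)) = b + pprt (a - b)"
    using pprt_decomp[of "a - b"] by (simp add: algebra_simps)
  then have "p a + p (pprt (- (a - b))) = p b + p (pprt (a - b))"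
    using add assms by (metis zero_le_pprt)
  then show ?thesis unfolding cone_extension_def by simp
qed

lemma cone_extension_eq: "0 \<le> a \<Longrightarrow> cone_extension p a = p a"
  using cone_extension_diff[of a 0] add[of 0 0] by simp

lemma cone_extension_add: "cone_extension p (x + y) = cone_extension p x + cone_extension p y"
proof -
  have "x + y = (pprt x + pprt y) - (pprt (- x) + pprt (- y))"
    by (simp only: add_diff_add flip: pprt_decomp)
  then have "cone_extension p (x + y) = p (pprt x + pprt y) - p (pprt (- x) + pprt (- y))"
    by (simp add: cone_extension_diff)
  then show ?thesis unfolding cone_extension_def by (simp add: add)
qed

lemma cone_extension_scaleR:
  assumes hom: "\<And>c a. 0 \<le> c \<Longrightarrow> 0 \<le> a \<Longrightarrow> p (c *\<^sub>R a) = c * p a"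
  shows "cone_extension p (r *\<^sub>R x) = r * cone_extension p x"
proof -
  have nonneg: "cone_extension p (c *\<^sub>R x) = c * cone_extension p x" if "0 \<le> c" for c
  proof -
    have "c *\<^sub>R x = c *\<^sub>R pprt x - c *\<^sub>R pprt (- x)"
      using pprt_decomp[of x] by (metis scaleR_right_diff_distrib)
    then have "cone_extension p (c *\<^sub>R x) = p (c *\<^sub>R pprt x) - p (c *\<^sub>R pprt (- x))"
      using that by (metis cone_extension_diff scaleR_nonneg_nonneg zero_le_pprt)
    then show ?thesis using that by (simp add: hom cone_extension_def algebra_simps)
  qed
  have neg: "cone_extension p (- y) = - cone_extension p y" for y
    using cone_extension_add[of y "- y"] cone_extension_eq[of 0] add[of 0 0] by simp
  show ?thesis
  proof (cases "0 \<le> r")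
    case False
    have "cone_extension p (r *\<^sub>R x) = - cone_extension p ((- r) *\<^sub>R x)"
      using neg[of "(- r) *\<^sub>R x"] by simp
    also have "\<dots> = r * cone_extension p x" using nonneg[of "- r"] False by simp
    finally show ?thesis .
  qed (rule nonneg)
qed

lemma cone_extension_bound:
  assumes bound: "\<And>a. 0 \<le> a \<Longrightarrow> \<bar>p a\<bar> \<le> K * norm a"
  shows "\<bar>cone_extension p x\<bar> \<le> norm x * (2 * \<bar>K\<bar>)"
proof -
  have bound': "\<bar>p a\<bar> \<le> \<bar>K\<bar> * norm a" if "0 \<le> a" for a
    using bound[OF that] mult_right_mono[OF abs_ge_self norm_ge_zero, of K a] by linarith
  have "\<bar>cone_extension p x\<bar> \<le> \<bar>p (pprt x)\<bar> + \<bar>p (pprt (- x))\<bar>"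
    unfolding cone_extension_def by simp
  also have "\<dots> \<le> \<bar>K\<bar> * norm x + \<bar>K\<bar> * norm x"
    using norm_pprt_le[of x] norm_pprt_le[of "- x"]
    by (intro add_mono order_trans[OF bound'] mult_left_mono) simp_all
  finally show ?thesis by (simp add: mult_ac)
qed

lemma cone_additive_extends_to_blinfun:
  assumes "\<And>c a. 0 \<le> c \<Longrightarrow> 0 \<le> a \<Longrightarrow> p (c *\<^sub>R a) = c * p a"
    and "\<And>a. 0 \<le> a \<Longrightarrow> \<bar>p a\<bar> \<le> K * norm a"
  obtains h :: "'a \<Rightarrow>\<^sub>L real" where "\<And>a. 0 \<le> a \<Longrightarrow> h a = p a"
proof -
  have "bounded_linear (cone_extension p)"
    using cone_extension_bound[OF assms(2)]
    by (intro bounded_linear_intro[where K = "2 * \<bar>K\<bar>"] cone_extension_add)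
      (auto simp: cone_extension_scaleR[OF assms(1)])
  then show ?thesis
    using that[of "Blinfun (cone_extension p)"]
      by (simp add: bounded_linear_Blinfun_apply cone_extension_eq)
qed

end

section \<open>Downward directed sets in the dual\<close>

definition dual_decreasing_to_zero :: "('a::banach_lattice \<Rightarrow>\<^sub>L real) set \<Rightarrow> bool" where
  "dual_decreasing_to_zero D \<longleftrightarrow> D \<noteq> {} \<and>
     (\<forall>f\<in>D. \<forall>g\<in>D. \<exists>h\<in>D. dual_le h f \<and> dual_le h g) \<and>
     (\<forall>f\<in>D. dual_le 0 f) \<and> (\<forall>h. (\<forall>f\<in>D. dual_le h f) \<longrightarrow> dual_le h 0)"

lemma dual_norm_order_continuous_iff:
  "dual_norm_order_continuous TYPE('a::banach_lattice) \<longleftrightarrow>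
     (\<forall>D::('a \<Rightarrow>\<^sub>L real) set. dual_decreasing_to_zero D \<longrightarrow> (\<forall>e>0. \<exists>f\<in>D. norm f < e))"
  unfolding dual_norm_order_continuous_def dual_decreasing_to_zero_def ..

lemma INF_directed_functionals_add:
  fixes D :: "('a::banach_lattice \<Rightarrow>\<^sub>L real) set"
  assumes "D \<noteq> {}" and dir: "\<And>f g. f \<in> D \<Longrightarrow> g \<in> D \<Longrightarrow> \<exists>h\<in>D. dual_le h f \<and> dual_le h g"
    and pos: "\<And>f. f \<in> D \<Longrightarrow> positive_functional f" and a: "0 \<le> a" and b: "0 \<le> b"
  shows "(INF f\<in>D. blinfun_apply f (a + b)) =
    (INF f\<in>D. blinfun_apply f a) + (INF f\<in>D. blinfun_apply f b)"
proof -
  have bdd: "bdd_below ((\<lambda>f. blinfun_apply f x) ` D)" if "0 \<le> x" for x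
    using pos that by (intro bdd_belowI2[of _ 0]) (simp add: positive_functional_def)
  note lower = cINF_lower[OF bdd] and greatest = cINF_greatest[OF \<open>D \<noteq> {}\<close>]
  let ?I = "INF f\<in>D. blinfun_apply f (a + b)"
  show ?thesis
  proof (rule order.antisym)
    have "?I - (INF g\<in>D. blinfun_apply g b) \<le> f a" if f: "f \<in> D" for f
    proof -
      have "?I - f a \<le> (INF g\<in>D. blinfun_apply g b)"
      proof (rule greatest)
        fix g assume g: "g \<in> D"
        obtain k where k: "k \<in> D" "dual_le k f" "dual_le k g" using dir f g by blast
        have "?I \<le> k a + k b"
          using lower[of "a + b" k] a b k(1) by (simp add: blinfun.add_right)
        also have "\<dots> \<le> f a + g b" using k a b unfolding dual_le_def by (intro add_mono) auto
        finally show "?I - f a \<le> g b" by simp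
      qed
      then show ?thesis by simp
    qed
    then have "?I - (INF g\<in>D. blinfun_apply g b) \<le> (INF f\<in>D. blinfun_apply f a)"
      by (rule greatest)
    then show "?I \<le> (INF f\<in>D. blinfun_apply f a) + (INF f\<in>D. blinfun_apply f b)" by simp
    show "(INF f\<in>D. blinfun_apply f a) + (INF f\<in>D. blinfun_apply f b) \<le> ?I"
      using a b by (intro greatest) (auto simp: blinfun.add_right intro: add_mono lower)
  qed
qed

lemma INF_functionals_scaleR:
  fixes D :: "('a::banach_lattice \<Rightarrow>\<^sub>L real) set"
  assumes "D \<noteq> {}" "\<And>f. f \<in> D \<Longrightarrow> positive_functional f" "0 \<le> c" "0 \<le> a"
  shows "(INF f\<in>D. blinfun_apply f (c *\<^sub>R a)) = c * (INF f\<in>D. blinfun_apply f a)"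
proof -
  have "c * (INF f\<in>D. blinfun_apply f a) = (INF s\<in>(\<lambda>f. blinfun_apply f a) ` D. c * s)"
    using assms
    by (intro continuous_at_Inf_mono bdd_belowI2[of _ 0])
      (auto simp: mono_def mult_left_mono positive_functional_def intro!: continuous_intros)
  then show ?thesis by (simp add: image_image blinfun.scaleR_right)
qed

lemma INF_directed_functionals_extends:
  fixes D :: "('a::banach_lattice \<Rightarrow>\<^sub>L real) set"
  assumes D: "D \<noteq> {}" "\<And>f g. f \<in> D \<Longrightarrow> g \<in> D \<Longrightarrow> \<exists>h\<in>D. dual_le h f \<and> dual_le h g"
    and pos: "\<And>f. f \<in> D \<Longrightarrow> positive_functional f"
  obtains h :: "'a \<Rightarrow>\<^sub>L real" where "\<And>a. 0 \<le> a \<Longrightarrow> h a = (INF f\<in>D. blinfun_apply f a)"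
proof -
  obtain f0 where f0: "f0 \<in> D" using D by blast
  have bound: "\<bar>INF f\<in>D. blinfun_apply f a\<bar> \<le> norm f0 * norm a" if a: "0 \<le> a" for a
  proof -
    have "0 \<le> (INF f\<in>D. blinfun_apply f a)"
      using pos a D by (intro cINF_greatest) (auto simp: positive_functional_def)
    moreover have "(INF f\<in>D. blinfun_apply f a) \<le> f0 a"
      using pos a f0 by (intro cINF_lower bdd_belowI2[of _ 0]) (auto simp: positive_functional_def)
    moreover have "f0 a \<le> norm f0 * norm a" using norm_blinfun[of f0 a] by simp
    ultimately show ?thesis by simp
  qed
  show ?thesis
    using cone_additive_extends_to_blinfun[where p = "\<lambda>a. INF f\<in>D. blinfun_apply f a",
        OF INF_directed_functionals_add[OF D pos] INF_functionals_scaleR[OF D(1) pos] bound] that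
    by blast
qed

lemma dual_decreasing_to_zero_pointwise:
  fixes D :: "('a::banach_lattice \<Rightarrow>\<^sub>L real) set"
  assumes D: "dual_decreasing_to_zero D" and w: "0 \<le> w" and "0 < \<eta>"
  shows "\<exists>f\<in>D. f w < \<eta>"
proof -
  have ne: "D \<noteq> {}" and dir: "\<And>f g. f \<in> D \<Longrightarrow> g \<in> D \<Longrightarrow> \<exists>h\<in>D. dual_le h f \<and> dual_le h g"
    and pos: "\<And>f. f \<in> D \<Longrightarrow> positive_functional f"
    and inf0: "\<And>h. (\<And>f. f \<in> D \<Longrightarrow> dual_le h f) \<Longrightarrow> dual_le h 0"
    using D by (auto simp: dual_decreasing_to_zero_def dual_le_0_iff)
  have bdd: "bdd_below ((\<lambda>f. blinfun_apply f a) ` D)" if "0 \<le> a" for a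
    using pos that by (intro bdd_belowI2[of _ 0]) (simp add: positive_functional_def)
  obtain h :: "'a \<Rightarrow>\<^sub>L real" where h: "\<And>a. 0 \<le> a \<Longrightarrow> h a = (INF f\<in>D. blinfun_apply f a)"
    using INF_directed_functionals_extends[OF ne dir pos] by blast
  have "dual_le h f" if "f \<in> D" for f
    unfolding dual_le_def using h cINF_lower[OF bdd that] by simp
  then have "dual_le h 0" by (rule inf0)
  then have "(INF f\<in>D. blinfun_apply f w) < \<eta>"
    using h[OF w] w \<open>0 < \<eta>\<close> unfolding dual_le_def by fastforce
  then show ?thesis using cINF_less_iff[OF ne bdd[OF w]] by simp
qed

lemma dual_decreasing_to_zero_below:
  assumes D: "dual_decreasing_to_zero D" and "f \<in> D" "0 \<le> w" "0 < \<eta>"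
  obtains g where "g \<in> D" "dual_le g f" "g w < \<eta>"
proof -
  obtain g' where g': "g' \<in> D" "g' w < \<eta>"
    using dual_decreasing_to_zero_pointwise[OF D assms(3,4)] by blast
  then obtain g where g: "g \<in> D" "dual_le g f" "dual_le g g'"
    using D \<open>f \<in> D\<close> unfolding dual_decreasing_to_zero_def by blast
  have "g w < \<eta>" using g(3) g'(2) \<open>0 \<le> w\<close> unfolding dual_le_def by force
  with g that show ?thesis by blast
qed

section \<open>Restrictions of positive functionals to bands\<close>

definition positive_directed_cone :: "'a::banach_lattice set \<Rightarrow> bool" where
  "positive_directed_cone V \<longleftrightarrow> 0 \<in> V \<and> (\<forall>v\<in>V. 0 \<le> v) \<and> (\<forall>v\<in>V. \<forall>c\<ge>0. c *\<^sub>R v \<in> V) \<and>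
     (\<forall>v\<in>V. \<forall>w\<in>V. \<exists>u\<in>V. v + w \<le> u)"

text \<open>On the positive cone, the restriction of \<phi> to the band generated by V.\<close>

definition band_restriction :: "('a::banach_lattice \<Rightarrow>\<^sub>L real) \<Rightarrow> 'a set \<Rightarrow> 'a \<Rightarrow> real" where
  "band_restriction \<phi> V y = (SUP v\<in>V. \<phi> (inf y v))"

lemma band_restriction_upper:
  fixes \<phi> :: "'a::banach_lattice \<Rightarrow>\<^sub>L real"
  shows "positive_functional \<phi> \<Longrightarrow> v \<in> V \<Longrightarrow> \<phi> (inf y v) \<le> band_restriction \<phi> V y"
  unfolding band_restriction_def
  by (intro cSUP_upper bdd_aboveI2[of _ _ "\<phi> y"]) (auto intro: positive_functional_mono)

lemma band_restriction_upper_le: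
  fixes \<phi> :: "'a::banach_lattice \<Rightarrow>\<^sub>L real"
  assumes "positive_functional \<phi>" "u \<in> V" "v \<le> u"
  shows "\<phi> (inf y v) \<le> band_restriction \<phi> V y"
  using assms band_restriction_upper[of \<phi> u V y]
    positive_functional_mono[of \<phi> "inf y v" "inf y u"] inf_mono[of y y v u]
  by simp

lemma band_restriction_least:
  fixes \<phi> :: "'a::banach_lattice \<Rightarrow>\<^sub>L real"
  shows "V \<noteq> {} \<Longrightarrow> (\<And>v. v \<in> V \<Longrightarrow> \<phi> (inf y v) \<le> m) \<Longrightarrow> band_restriction \<phi> V y \<le> m"
  unfolding band_restriction_def by (rule cSUP_least)

lemma band_restriction_le:
  fixes \<phi> :: "'a::banach_lattice \<Rightarrow>\<^sub>L real"
  shows "positive_functional \<phi> \<Longrightarrow> V \<noteq> {} \<Longrightarrow> band_restriction \<phi> V y \<le> \<phi> y"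
  by (rule band_restriction_least) (auto intro: positive_functional_mono)

lemma band_restriction_nonneg:
  fixes \<phi> :: "'a::banach_lattice \<Rightarrow>\<^sub>L real"
  shows "positive_functional \<phi> \<Longrightarrow> 0 \<in> V \<Longrightarrow> 0 \<le> y \<Longrightarrow> 0 \<le> band_restriction \<phi> V y"
  using band_restriction_upper[of \<phi> 0 V y] by (simp add: inf_absorb2)

lemma band_restriction_mono:
  fixes \<phi> :: "'a::banach_lattice \<Rightarrow>\<^sub>L real"
  assumes "positive_functional \<phi>" "V' \<noteq> {}" "\<And>v'. v' \<in> V' \<Longrightarrow> \<exists>v\<in>V. v' \<le> v"
  shows "band_restriction \<phi> V' y \<le> band_restriction \<phi> V y"
proof (rule band_restriction_least[OF assms(2)])
  fix v' assume "v' \<in> V'"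
  then obtain v where "v \<in> V" "v' \<le> v" using assms(3) by blast
  then show "\<phi> (inf y v') \<le> band_restriction \<phi> V y" by (rule band_restriction_upper_le[OF assms(1)])
qed

lemma positive_directed_coneD:
  assumes "positive_directed_cone V"
  shows "V \<noteq> {}" "\<And>v. v \<in> V \<Longrightarrow> 0 \<le> v" "\<And>v c. v \<in> V \<Longrightarrow> 0 \<le> c \<Longrightarrow> c *\<^sub>R v \<in> V"
    "\<And>v w. v \<in> V \<Longrightarrow> w \<in> V \<Longrightarrow> \<exists>u\<in>V. v + w \<le> u"
  using assms unfolding positive_directed_cone_def by auto

context
  fixes \<phi> :: "'a::banach_lattice \<Rightarrow>\<^sub>L real" and V :: "'a set"
  assumes \<phi>: "positive_functional \<phi>" and V: "positive_directed_cone V"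
begin

lemma band_restriction_add_ge:
  assumes v1: "v1 \<in> V" and v2: "v2 \<in> V" and "0 \<le> a" "0 \<le> b"
  shows "\<phi> (inf a v1) + \<phi> (inf b v2) \<le> band_restriction \<phi> V (a + b)"
proof -
  note V = positive_directed_coneD[OF V] and mono = positive_functional_mono[OF \<phi>]
  obtain v where v: "v \<in> V" "v1 + v2 \<le> v" using V(4)[OF v1 v2] by blast
  have "v1 \<le> v" "v2 \<le> v"
    using add_increasing2[OF V(2)[OF v2] order_refl, of v1]
      add_increasing[OF V(2)[OF v1] order_refl, of v2]
      v(2) by (blast intro: order_trans)+
  then have "\<phi> (inf a v1) + \<phi> (inf b v2) \<le> \<phi> (inf a v + inf b v)"
    unfolding blinfun.add_right by (intro add_mono mono inf_mono) simp_all
  also have "\<dots> \<le> \<phi> (inf (a + b) (2 *\<^sub>R v))"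
    unfolding scaleR_2 by (intro mono le_infI add_mono) simp_all
  also have "\<dots> \<le> band_restriction \<phi> V (a + b)"
    using V(3)[OF v(1), of 2] by (intro band_restriction_upper[OF \<phi>]) auto
  finally show ?thesis .
qed

lemma band_restriction_add:
  assumes a: "0 \<le> a" and b: "0 \<le> b"
  shows "band_restriction \<phi> V (a + b) = band_restriction \<phi> V a + band_restriction \<phi> V b"
proof -
  note V = positive_directed_coneD[OF V]
  note upper = band_restriction_upper[OF \<phi>] and least = band_restriction_least[OF V(1)]
  let ?p = "band_restriction \<phi> V"
  show ?thesis
  proof (rule order.antisym)
    show "?p (a + b) \<le> ?p a + ?p b"
    proof (rule least)
      fix v assume v: "v \<in> V"
      have "\<phi> (inf (a + b) v) \<le> \<phi> (inf a v + inf b v)"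
        using a b V(2)[OF v] by (intro positive_functional_mono[OF \<phi>] inf_add_le_add_inf)
      also have "\<dots> \<le> ?p a + ?p b" using v by (simp add: blinfun.add_right add_mono upper)
      finally show "\<phi> (inf (a + b) v) \<le> ?p a + ?p b" .
    qed
    have "\<phi> (inf a v1) \<le> ?p (a + b) - ?p b" if v1: "v1 \<in> V" for v1
    proof -
      have "?p b \<le> ?p (a + b) - \<phi> (inf a v1)"
        using band_restriction_add_ge[OF v1 _ a b] by (intro least) (simp add: algebra_simps)
      then show ?thesis by simp
    qed
    then have "?p a \<le> ?p (a + b) - ?p b" by (rule least)
    then show "?p a + ?p b \<le> ?p (a + b)" by simp
  qed
qed

lemma band_restriction_scaleR_le:
  assumes c: "0 < c"
  shows "band_restriction \<phi> V (c *\<^sub>R a) \<le> c * band_restriction \<phi> V a"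
proof (rule band_restriction_least[OF positive_directed_coneD(1)[OF V]])
  fix v assume v: "v \<in> V"
  have "inf (c *\<^sub>R a) v = c *\<^sub>R inf a (inverse c *\<^sub>R v)"
    using scaleR_inf_distrib[of c a "inverse c *\<^sub>R v"] c by simp
  then have "\<phi> (inf (c *\<^sub>R a) v) = c * \<phi> (inf a (inverse c *\<^sub>R v))"
    by (simp only: blinfun.scaleR_right real_scaleR_def)
  also have "\<dots> \<le> c * band_restriction \<phi> V a"
    using positive_directed_coneD(3)[OF V v, of "inverse c"] c
    by (intro mult_left_mono band_restriction_upper[OF \<phi>]) auto
  finally show "\<phi> (inf (c *\<^sub>R a) v) \<le> c * band_restriction \<phi> V a" .
qed

lemma band_restriction_scaleR:
  assumes c: "0 \<le> c" and a: "0 \<le> a"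
  shows "band_restriction \<phi> V (c *\<^sub>R a) = c * band_restriction \<phi> V a"
proof (cases "c = 0")
  case True
  have "band_restriction \<phi> V 0 \<le> 0"
    using positive_directed_coneD[OF V] by (intro band_restriction_least) (auto simp: inf_absorb1)
  then show ?thesis
    using True band_restriction_nonneg[OF \<phi>] V
      by (simp add: positive_directed_cone_def order.antisym)
next
  case False
  with c have c: "0 < c" by simp
  have "band_restriction \<phi> V a \<le> inverse c * band_restriction \<phi> V (c *\<^sub>R a)"
    using band_restriction_scaleR_le[of "inverse c" "c *\<^sub>R a"] c by simp
  then have "c * band_restriction \<phi> V a \<le> band_restriction \<phi> V (c *\<^sub>R a)"
    using c by (simp add: field_simps)
  with band_restriction_scaleR_le[OF c, of a] show ?thesis by simp
qed

lemma band_restriction_extends: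
  obtains \<psi> where "positive_functional \<psi>" "\<And>y. 0 \<le> y \<Longrightarrow> \<psi> y = band_restriction \<phi> V y"
proof -
  have V0: "0 \<in> V" "V \<noteq> {}" using V unfolding positive_directed_cone_def by auto
  have bound: "\<bar>band_restriction \<phi> V y\<bar> \<le> norm \<phi> * norm y" if "0 \<le> y" for y
    using band_restriction_nonneg[OF \<phi> V0(1) that] band_restriction_le[OF \<phi> V0(2), of y]
      norm_blinfun[of \<phi> y] by simp
  obtain \<psi> :: "'a \<Rightarrow>\<^sub>L real" where \<psi>: "\<And>y. 0 \<le> y \<Longrightarrow> \<psi> y = band_restriction \<phi> V y"
    using cone_additive_extends_to_blinfun[where p = "band_restriction \<phi> V",
        OF band_restriction_add band_restriction_scaleR bound] by blast
  moreover have "positive_functional \<psi>"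
    using \<psi> band_restriction_nonneg[OF \<phi> V0(1)] by (simp add: positive_functional_def)
  ultimately show ?thesis using that by blast
qed

end

section \<open>Disjoint sequences\<close>

lemma disjoint_order_bounded_weakly_null:
  fixes a :: "nat \<Rightarrow> 'a::banach_lattice" and F :: "'a \<Rightarrow>\<^sub>L real"
  assumes disj: "\<And>i j. i \<noteq> j \<Longrightarrow> inf (a i) (a j) = 0"
    and pos: "\<And>i. 0 \<le> a i" and le: "\<And>i. a i \<le> u"
  shows "(\<lambda>n. F (a n)) \<longlonglongrightarrow> 0"
proof -
  have u: "0 \<le> u" using pos[of 0] le[of 0] by simp
  have "(\<Sum>i<n. \<bar>F (a i)\<bar>) \<le> norm F * norm u" for n
  proof -
    define c where "c i = sgn (F (a i))" for i
    have "(\<Sum>i<n. \<bar>F (a i)\<bar>) = (\<Sum>i<n. F (c i *\<^sub>R a i))"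
      unfolding c_def by (intro sum.cong) (auto simp: blinfun.scaleR_right sgn_if)
    also have "\<dots> = F (\<Sum>i<n. c i *\<^sub>R a i)" by (simp add: blinfun.sum_right)
    also have "\<dots> \<le> norm F * norm (\<Sum>i<n. c i *\<^sub>R a i)"
      using norm_blinfun[of F] by (metis abs_le_D1 real_norm_def)
    also have "norm (\<Sum>i<n. c i *\<^sub>R a i) \<le> norm u"
    proof (rule norm_le_if_lmod_le)
      have "lmod (\<Sum>i<n. c i *\<^sub>R a i) \<le> (\<Sum>i<n. lmod (c i *\<^sub>R a i))" by (rule lmod_sum_le)
      also have "\<dots> \<le> (\<Sum>i<n. a i)"
        by (intro sum_mono lmod_scaleR_le pos) (simp add: c_def abs_sgn_eq)
      also have "\<dots> \<le> u" using disj pos le u by (intro sum_le_if_disjoint) auto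
      finally show "lmod (\<Sum>i<n. c i *\<^sub>R a i) \<le> u" .
    qed
    then have "norm F * norm (\<Sum>i<n. c i *\<^sub>R a i) \<le> norm F * norm u"
      by (intro mult_left_mono) auto
    finally show ?thesis .
  qed
  then have "summable (\<lambda>i. \<bar>F (a i)\<bar>)" by (intro summableI_nonneg_bounded) auto
  then show ?thesis using summable_LIMSEQ_zero tendsto_rabs_zero_iff by blast
qed

lemma uaw_null_if_disjoint:
  fixes z :: "nat \<Rightarrow> 'a::banach_lattice"
  assumes disj: "\<And>i j. i \<noteq> j \<Longrightarrow> inf (z i) (z j) = 0" and pos: "\<And>n. 0 \<le> z n"
  shows "uaw_null z"
  unfolding uaw_null_def
proof (intro allI impI)
  fix u :: 'a and F :: "'a \<Rightarrow>\<^sub>L real"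
  assume u: "0 \<le> u"
  have "inf (inf (z i) u) (inf (z j) u) = 0" if "i \<noteq> j" for i j
    using disj[OF that] pos[of i] pos[of j] u inf_mono[of "inf (z i) u" "z i" "inf (z j) u" "z j"]
    by (intro order.antisym) auto
  then have "(\<lambda>n. F (inf (z n) u)) \<longlonglongrightarrow> 0"
    using pos u by (intro disjoint_order_bounded_weakly_null[where u = u]) auto
  then show "(\<lambda>n. F (inf (lmod (z n)) u)) \<longlonglongrightarrow> 0"
    using pos by (simp add: lmod_eq_self)
qed

definition disjoint_weight :: "(nat \<Rightarrow> 'a::banach_lattice) \<Rightarrow> 'a" where
  "disjoint_weight y = (\<Sum>k. (1/2::real) ^ k *\<^sub>R y k)"

text \<open>For i < j the term 4^j (y_0 + ... + y_{j-1}) dominates y_i, while 2^{-i} times the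
  weight dominates 2^{-i-j} y_j; so the i-th and j-th parts lie below (y_i - l y_j)^+ and
  (y_j - m y_i)^+ with l m \<ge> 1, which are disjoint.\<close>

definition disjoint_part :: "(nat \<Rightarrow> 'a::banach_lattice) \<Rightarrow> nat \<Rightarrow> 'a" where
  "disjoint_part y n =
     pprt (y n - ((4::real) ^ n *\<^sub>R (\<Sum>k<n. y k) + (1/2::real) ^ n *\<^sub>R disjoint_weight y))"

lemma disjoint_weight_ge:
  fixes y :: "nat \<Rightarrow> 'a::banach_lattice"
  assumes pos: "\<And>n. 0 \<le> y n" and bnd: "\<And>n. norm (y n) \<le> M"
  shows "(1/2::real) ^ m *\<^sub>R y m \<le> disjoint_weight y"
proof -
  have "summable (\<lambda>k. (1/2::real) ^ k *\<^sub>R y k)"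
  proof (rule summable_norm_cancel, rule summable_comparison_test)
    show "\<exists>N. \<forall>n\<ge>N. norm (norm ((1/2::real) ^ n *\<^sub>R y n)) \<le> M * (1/2) ^ n"
      using bnd by (auto simp: mult.commute intro: mult_left_mono)
    show "summable (\<lambda>n. M * (1/2::real) ^ n)" by (intro summable_mult summable_geometric) simp
  qed
  then have "(\<lambda>N. (\<Sum>k<N. (1/2::real) ^ k *\<^sub>R y k) - (1/2) ^ m *\<^sub>R y m)
      \<longlonglongrightarrow> disjoint_weight y - (1/2) ^ m *\<^sub>R y m"
    unfolding disjoint_weight_def by (intro tendsto_diff summable_LIMSEQ tendsto_const)
  moreover have
    "\<forall>\<^sub>F N in sequentially. (\<Sum>k<N. (1/2::real) ^ k *\<^sub>R y k) - (1/2) ^ m *\<^sub>R y m \<in> {x. 0 \<le> x}"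
    using eventually_gt_at_top[of m]
    by eventually_elim
      (use pos in \<open>auto intro!: member_le_sum_nonneg[where f = "\<lambda>k. (1/2::real) ^ k *\<^sub>R y k"]
        scaleR_nonneg_nonneg\<close>)
  ultimately have "disjoint_weight y - (1/2) ^ m *\<^sub>R y m \<in> {x. 0 \<le> x}"
    by (intro Lim_in_closed_set[OF closed_nonneg_cone]) auto
  then show ?thesis by simp
qed

lemma disjoint_weight_nonneg:
  "(\<And>n. 0 \<le> y n) \<Longrightarrow> (\<And>n. norm (y n) \<le> M) \<Longrightarrow> 0 \<le> disjoint_weight y"
  using disjoint_weight_ge[of y M 0] by (metis order_trans power_0 scaleR_one)

lemma disjoint_part_nonneg: "0 \<le> disjoint_part y n"
  by (simp add: disjoint_part_def)

lemma disjoint_part_le: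
  fixes y :: "nat \<Rightarrow> 'a::banach_lattice"
  assumes pos: "\<And>n. 0 \<le> y n" and bnd: "\<And>n. norm (y n) \<le> M"
  shows "disjoint_part y n \<le> y n"
proof -
  let ?w = "(4::real) ^ n *\<^sub>R (\<Sum>k<n. y k) + (1/2::real) ^ n *\<^sub>R disjoint_weight y"
  have "0 \<le> ?w"
    using pos disjoint_weight_nonneg[of y M, OF pos bnd]
    by (intro add_nonneg_nonneg scaleR_nonneg_nonneg sum_nonneg) auto
  then have "y n - ?w \<le> y n" by (subst diff_le_eq) (rule add_increasing2, simp_all)
  then show ?thesis unfolding disjoint_part_def pprt_def using pos[of n] by (rule sup_least)
qed

lemma disjoint_part_disjoint_less:
  fixes y :: "nat \<Rightarrow> 'a::banach_lattice"
  assumes pos: "\<And>n. 0 \<le> y n" and bnd: "\<And>n. norm (y n) \<le> M" and ij: "i < j"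
  shows "inf (disjoint_part y i) (disjoint_part y j) = 0"
proof -
  let ?s = "disjoint_weight y" and ?W = "\<lambda>n. (4::real) ^ n *\<^sub>R (\<Sum>k<n. y k)"
  define l where "l = (1/2::real) ^ i * (1/2) ^ j"
  define m where "m = (4::real) ^ j"
  have lm: "1 \<le> l * m"
  proof -
    have "m = 2 ^ j * 2 ^ j" unfolding m_def by (simp add: power_mult_distrib[symmetric])
    then have "l * m = (1/2) ^ i * 2 ^ j"
      unfolding l_def by (simp add: power_mult_distrib[symmetric] field_simps)
    also have "\<dots> \<ge> (1/2) ^ i * 2 ^ i" using ij by (intro mult_left_mono power_increasing) auto
    finally show ?thesis by (simp add: power_mult_distrib[symmetric])
  qed
  have "l *\<^sub>R y j \<le> (1/2::real) ^ i *\<^sub>R ?s"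
    using scaleR_left_mono[OF disjoint_weight_ge[of y M j, OF pos bnd], of "(1/2::real) ^ i"]
    by (simp add: l_def)
  also have "\<dots> \<le> ?W i + (1/2::real) ^ i *\<^sub>R ?s"
    using pos by (simp add: scaleR_nonneg_nonneg sum_nonneg)
  finally have zi: "disjoint_part y i \<le> pprt (y i - l *\<^sub>R y j)"
    unfolding disjoint_part_def by (intro pprt_mono diff_left_mono)
  have "m *\<^sub>R y i \<le> ?W j"
    using ij pos unfolding m_def by (intro scaleR_left_mono member_le_sum_nonneg) auto
  also have "\<dots> \<le> ?W j + (1/2::real) ^ j *\<^sub>R ?s"
    using disjoint_weight_nonneg[of y M, OF pos bnd] by (simp add: scaleR_nonneg_nonneg)
  finally have zj: "disjoint_part y j \<le> pprt (y j - m *\<^sub>R y i)"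
    unfolding disjoint_part_def by (intro pprt_mono diff_left_mono)
  have "inf (pprt (y i - l *\<^sub>R y j)) (pprt (y j - m *\<^sub>R y i)) = 0"
    using pos lm by (intro inf_pprt_diff_scaleR_eq_0) (auto simp: l_def m_def)
  then have "inf (disjoint_part y i) (disjoint_part y j) \<le> 0"
    using inf_mono[OF zi zj] by simp
  then show ?thesis by (intro order.antisym) (simp_all add: disjoint_part_nonneg)
qed

lemma disjoint_part_disjoint:
  fixes y :: "nat \<Rightarrow> 'a::banach_lattice"
  assumes "\<And>n. 0 \<le> y n" "\<And>n. norm (y n) \<le> M" "i \<noteq> j"
  shows "inf (disjoint_part y i) (disjoint_part y j) = 0"
  using assms disjoint_part_disjoint_less[of y M i j] disjoint_part_disjoint_less[of y M j i]
  by (cases "i < j") (simp_all add: inf_commute)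

lemma norm_disjoint_part_le:
  fixes y :: "nat \<Rightarrow> 'a::banach_lattice"
  assumes "\<And>n. 0 \<le> y n" "\<And>n. norm (y n) \<le> M"
  shows "norm (disjoint_part y n) \<le> M"
  using norm_mono_nonneg[OF disjoint_part_nonneg disjoint_part_le[of y M n, OF assms]]
    assms(2)[of n]
  by linarith

lemma disjoint_part_lower_bound:
  fixes y :: "nat \<Rightarrow> 'a::banach_lattice"
  assumes pos: "\<And>n. 0 \<le> y n" and bnd: "\<And>n. norm (y n) \<le> M" and f: "positive_functional f"
  shows "f (y n) - f (inf (y n) ((4::real) ^ n *\<^sub>R (\<Sum>k<n. y k)))
      - (1/2) ^ n * f (disjoint_weight y) \<le> f (disjoint_part y n)"
proof -
  let ?W = "(4::real) ^ n *\<^sub>R (\<Sum>k<n. y k)" and ?r = "(1/2::real) ^ n *\<^sub>R disjoint_weight y"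
  have "0 \<le> ?r" using disjoint_weight_nonneg[of y M, OF pos bnd] by (simp add: scaleR_nonneg_nonneg)
  then have "f (inf (y n) (?W + ?r)) \<le> f (inf (y n) ?W + ?r)"
    by (intro positive_functional_mono[OF f] inf_add_nonneg_le)
  moreover have "f (disjoint_part y n) = f (y n) - f (inf (y n) (?W + ?r))"
    unfolding disjoint_part_def pprt_diff_eq_diff_inf by (rule blinfun.diff_right)
  ultimately show ?thesis
    unfolding blinfun.add_right blinfun.scaleR_right real_scaleR_def by linarith
qed

section \<open>Order continuity of the dual norm along disjoint sequences\<close>

definition tail_cone :: "(nat \<Rightarrow> 'a::banach_lattice) \<Rightarrow> nat \<Rightarrow> 'a set" where
  "tail_cone z N = {t *\<^sub>R (\<Sum>k\<in>{N..<N + K}. z k) | t K. 0 \<le> t}"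

lemma positive_directed_cone_tail_cone:
  fixes z :: "nat \<Rightarrow> 'a::banach_lattice"
  assumes pos: "\<And>n. 0 \<le> z n"
  shows "positive_directed_cone (tail_cone z N)"
  unfolding positive_directed_cone_def
proof (intro conjI ballI allI impI)
  let ?S = "\<lambda>K. \<Sum>k\<in>{N..<N + K}. z k"
  have S_nonneg: "0 \<le> ?S K" for K using pos by (intro sum_nonneg) auto
  have S_mono: "?S K \<le> ?S K'" if "K \<le> K'" for K K' using pos that by (intro sum_mono2) auto
  show "0 \<in> tail_cone z N" unfolding tail_cone_def by (auto intro!: exI[of _ 0])
  fix v assume "v \<in> tail_cone z N"
  then obtain t K where v: "v = t *\<^sub>R ?S K" "0 \<le> t" unfolding tail_cone_def by auto
  show "0 \<le> v" using v S_nonneg by (simp add: scaleR_nonneg_nonneg)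
  show "c *\<^sub>R v \<in> tail_cone z N" if "0 \<le> c" for c
    using v that unfolding tail_cone_def by (auto intro!: exI[of _ "c * t"])
  fix w assume "w \<in> tail_cone z N"
  then obtain t' K' where w: "w = t' *\<^sub>R ?S K'" "0 \<le> t'" unfolding tail_cone_def by auto
  have "v + w \<le> t *\<^sub>R ?S (max K K') + t' *\<^sub>R ?S (max K K')"
    unfolding v(1) w(1) using v(2) w(2) by (intro add_mono scaleR_left_mono S_mono) auto
  moreover have "t *\<^sub>R ?S (max K K') + t' *\<^sub>R ?S (max K K') \<in> tail_cone z N"
    using v w unfolding tail_cone_def
      by (auto simp flip: scaleR_add_left intro!: exI[of _ "t + t'"])
  ultimately show "\<exists>u\<in>tail_cone z N. v + w \<le> u" by blast
qed

lemma tail_cone_antimono: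
  fixes z :: "nat \<Rightarrow> 'a::banach_lattice"
  assumes pos: "\<And>n. 0 \<le> z n" and "N \<le> N'" and "v \<in> tail_cone z N'"
  shows "\<exists>w\<in>tail_cone z N. v \<le> w"
proof -
  obtain t K where v: "v = t *\<^sub>R (\<Sum>k\<in>{N'..<N' + K}. z k)" "0 \<le> t"
    using assms(3) unfolding tail_cone_def by auto
  have "v \<le> t *\<^sub>R (\<Sum>k\<in>{N..<N + (N' + K - N)}. z k)"
    unfolding v using v(2) pos \<open>N \<le> N'\<close> by (intro scaleR_left_mono sum_mono2) auto
  moreover have "t *\<^sub>R (\<Sum>k\<in>{N..<N + (N' + K - N)}. z k) \<in> tail_cone z N"
    unfolding tail_cone_def using v(2) by blast
  ultimately show ?thesis by blast
qed

lemma self_mem_tail_cone: "z N \<in> tail_cone z N"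
  unfolding tail_cone_def by (auto intro!: exI[of _ 1])

lemma head_add_tail_le_tail_cone:
  fixes z :: "nat \<Rightarrow> 'a::banach_lattice"
  assumes pos: "\<And>n. 0 \<le> z n" and disj: "\<And>i j. i \<noteq> j \<Longrightarrow> inf (z i) (z j) = 0"
    and "K \<le> N" "0 \<le> t0" "v \<in> tail_cone z N"
  shows "inf (t0 *\<^sub>R (\<Sum>k\<in>{0..<K}. z k)) v = 0"
    and "\<exists>u\<in>tail_cone z 0. t0 *\<^sub>R (\<Sum>k\<in>{0..<K}. z k) + v \<le> u"
proof -
  obtain t K' where v: "v = t *\<^sub>R (\<Sum>k\<in>{N..<N + K'}. z k)" "0 \<le> t"
    using assms(5) unfolding tail_cone_def by auto
  let ?A = "{0..<K}" and ?B = "{N..<N + K'}" and ?T = "max t0 t"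
  have disj_AB: "?A \<inter> ?B = {}" using \<open>K \<le> N\<close> by auto
  show "inf (t0 *\<^sub>R sum z ?A) v = 0"
    unfolding v using disj_AB pos disj \<open>0 \<le> t0\<close> v(2)
    by (intro inf_scaleR_eq_0_if_disjoint inf_sum_sum_eq_0_if_disjoint sum_nonneg) auto
  have "t0 *\<^sub>R sum z ?A + v \<le> ?T *\<^sub>R sum z ?A + ?T *\<^sub>R sum z ?B"
    unfolding v using pos by (intro add_mono scaleR_right_mono sum_nonneg) auto
  also have "\<dots> = ?T *\<^sub>R sum z (?A \<union> ?B)"
    using disj_AB by (simp add: sum.union_disjoint scaleR_add_right)
  also have "\<dots> \<le> ?T *\<^sub>R sum z {0..<0 + (N + K')}"
    using pos \<open>0 \<le> t0\<close> \<open>K \<le> N\<close> by (intro scaleR_left_mono sum_mono2) auto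
  finally have "t0 *\<^sub>R sum z ?A + v \<le> ?T *\<^sub>R sum z {0..<0 + (N + K')}" .
  moreover have "?T *\<^sub>R sum z {0..<0 + (N + K')} \<in> tail_cone z 0"
    unfolding tail_cone_def mem_Collect_eq using \<open>0 \<le> t0\<close>
    by (intro exI[of _ ?T] exI[of _ "N + K'"]) (simp add: le_max_iff_disj)
  ultimately show "\<exists>u\<in>tail_cone z 0. t0 *\<^sub>R sum z ?A + v \<le> u" by blast
qed

text \<open>Write \<psi>_N for the band restriction to the N-th tail cone. For v_0 in the cone of the first
  K elements and v in the N-th tail cone, K \<le> N, disjointness gives
  \<phi> (y \<sqinter> v_0) + \<phi> (y \<sqinter> v) \<le> \<psi>_0 y; hence \<psi>_N y \<le> \<psi>_0 y - \<phi> (y \<sqinter> v_0), which is small once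
  \<phi> (y \<sqinter> v_0) is close to the supremum \<psi>_0 y.\<close>

lemma band_restriction_tail_cone_tendsto_zero:
  fixes \<phi> :: "'a::banach_lattice \<Rightarrow>\<^sub>L real" and z :: "nat \<Rightarrow> 'a"
  assumes \<phi>: "positive_functional \<phi>" and pos: "\<And>n. 0 \<le> z n"
    and disj: "\<And>i j. i \<noteq> j \<Longrightarrow> inf (z i) (z j) = 0" and y: "0 \<le> y"
  shows "(\<lambda>N. band_restriction \<phi> (tail_cone z N) y) \<longlonglongrightarrow> 0"
proof (rule LIMSEQ_I)
  fix r :: real assume r: "0 < r"
  note cone = positive_directed_cone_tail_cone[of z, OF pos]
  let ?B = "band_restriction \<phi> (tail_cone z 0) y"
  have ne: "tail_cone z 0 \<noteq> {}" using positive_directed_coneD(1)[OF cone] .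
  have bdd: "bdd_above ((\<lambda>v. \<phi> (inf y v)) ` tail_cone z 0)"
    by (intro bdd_aboveI2[of _ _ "\<phi> y"]) (auto intro: positive_functional_mono[OF \<phi>])
  have "\<exists>v\<in>tail_cone z 0. ?B - r < \<phi> (inf y v)"
    using less_cSUP_iff[OF ne bdd, of "?B - r"] r unfolding band_restriction_def by simp
  then obtain t0 K where t0: "0 \<le> t0" and
    close: "?B - r < \<phi> (inf y (t0 *\<^sub>R (\<Sum>k\<in>{0..<K}. z k)))"
    unfolding tail_cone_def by auto
  have "band_restriction \<phi> (tail_cone z N) y < r" if KN: "K \<le> N" for N
  proof -
    have "band_restriction \<phi> (tail_cone z N) y \<le> ?B - \<phi> (inf y (t0 *\<^sub>R (\<Sum>k\<in>{0..<K}. z k)))"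
    proof (rule band_restriction_least[OF positive_directed_coneD(1)[OF cone]])
      fix v assume v: "v \<in> tail_cone z N"
      let ?v0 = "t0 *\<^sub>R (\<Sum>k\<in>{0..<K}. z k)"
      obtain u where u: "u \<in> tail_cone z 0" "?v0 + v \<le> u"
        using head_add_tail_le_tail_cone(2)[OF pos disj KN t0 v] by blast
      have "\<phi> (inf y ?v0) + \<phi> (inf y v) \<le> \<phi> (inf y (?v0 + v))"
        unfolding blinfun.add_right[symmetric] using pos t0 y
        by (intro positive_functional_mono[OF \<phi>] inf_add_inf_le_inf_add
            head_add_tail_le_tail_cone(1)[OF pos disj KN t0 v] positive_directed_coneD(2)[OF cone v]
            scaleR_nonneg_nonneg sum_nonneg) auto
      also have "\<dots> \<le> ?B" using u by (intro band_restriction_upper_le[OF \<phi>])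
      finally show "\<phi> (inf y v) \<le> ?B - \<phi> (inf y ?v0)" by simp
    qed
    with close show ?thesis by simp
  qed
  moreover have "0 \<le> band_restriction \<phi> (tail_cone z N) y" for N
    using cone unfolding positive_directed_cone_def
      by (intro band_restriction_nonneg[OF \<phi> _ y]) auto
  ultimately show "\<exists>N0. \<forall>N\<ge>N0. norm (band_restriction \<phi> (tail_cone z N) y - 0) < r"
    by auto
qed

lemma dual_decreasing_to_zero_tail_restrictions:
  fixes \<phi> :: "'a::banach_lattice \<Rightarrow>\<^sub>L real" and z :: "nat \<Rightarrow> 'a" and \<psi> :: "nat \<Rightarrow> 'a \<Rightarrow>\<^sub>L real"
  assumes \<phi>: "positive_functional \<phi>" and pos: "\<And>n. 0 \<le> z n"
    and disj: "\<And>i j. i \<noteq> j \<Longrightarrow> inf (z i) (z j) = 0"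
    and \<psi>_pos: "\<And>N. positive_functional (\<psi> N)"
    and \<psi>: "\<And>N y. 0 \<le> y \<Longrightarrow> \<psi> N y = band_restriction \<phi> (tail_cone z N) y"
  shows "dual_decreasing_to_zero (range \<psi>)"
proof -
  have antimono: "dual_le (\<psi> N') (\<psi> N)" if "N \<le> N'" for N N'
    unfolding dual_le_def using \<psi> band_restriction_mono[OF \<phi>
        positive_directed_coneD(1)[OF positive_directed_cone_tail_cone[of z, OF pos]]
        tail_cone_antimono[of z, OF pos that]]
    by simp
  have "dual_le h 0" if h: "\<And>N. dual_le h (\<psi> N)" for h
    unfolding dual_le_def
  proof (intro allI impI)
    fix y :: 'a assume y: "0 \<le> y"
    have "h y \<le> band_restriction \<phi> (tail_cone z N) y" for N
      using h[of N] y \<psi>[OF y, of N] unfolding dual_le_def by force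
    then have "h y \<le> 0"
      using tendsto_le[OF trivial_limit_sequentially
          band_restriction_tail_cone_tendsto_zero[OF \<phi> pos disj y] tendsto_const] by simp
    then show "h y \<le> blinfun_apply 0 y" by simp
  qed
  moreover have "\<exists>h\<in>range \<psi>. dual_le h (\<psi> N) \<and> dual_le h (\<psi> N')" for N N'
    using antimono[of N "max N N'"] antimono[of N' "max N N'"] by auto
  ultimately show ?thesis
    unfolding dual_decreasing_to_zero_def using \<psi>_pos by (auto simp: dual_le_0_iff)
qed

lemma tail_band_restrictions:
  fixes \<phi> :: "'a::banach_lattice \<Rightarrow>\<^sub>L real" and z :: "nat \<Rightarrow> 'a"
  assumes \<phi>: "positive_functional \<phi>" and pos: "\<And>n. 0 \<le> z n"
    and disj: "\<And>i j. i \<noteq> j \<Longrightarrow> inf (z i) (z j) = 0"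
  obtains \<psi> :: "nat \<Rightarrow> 'a \<Rightarrow>\<^sub>L real"
  where "dual_decreasing_to_zero (range \<psi>)" "\<And>N n. N \<le> n \<Longrightarrow> \<phi> (z n) \<le> \<psi> N (z n)"
proof -
  have "\<forall>N. \<exists>\<psi>. positive_functional \<psi> \<and> (\<forall>y. 0 \<le> y \<longrightarrow> \<psi> y = band_restriction \<phi> (tail_cone z N) y)"
  proof
    fix N
    obtain \<psi> where "positive_functional \<psi>" "\<And>y. 0 \<le> y \<Longrightarrow> \<psi> y = band_restriction \<phi> (tail_cone z N) y"
      using band_restriction_extends[OF \<phi> positive_directed_cone_tail_cone[of z N, OF pos]] by blast
    then show "\<exists>\<psi>. positive_functional \<psi> \<and> (\<forall>y. 0 \<le> y \<longrightarrow> \<psi> y = band_restriction \<phi> (tail_cone z N) y)"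
      by blast
  qed
  then obtain \<psi> :: "nat \<Rightarrow> 'a \<Rightarrow>\<^sub>L real" where \<psi>_pos: "\<And>N. positive_functional (\<psi> N)"
    and \<psi>: "\<And>N y. 0 \<le> y \<Longrightarrow> \<psi> N y = band_restriction \<phi> (tail_cone z N) y"
    using choice[OF \<open>\<forall>N. \<exists>\<psi>. _\<close>] by blast
  have le: "\<phi> (z n) \<le> \<psi> N (z n)" if "N \<le> n" for N n
  proof -
    have "\<phi> (z n) \<le> band_restriction \<phi> (tail_cone z n) (z n)"
      using band_restriction_upper[OF \<phi> self_mem_tail_cone[of z n], of "z n"] by simp
    also have "\<dots> \<le> band_restriction \<phi> (tail_cone z N) (z n)"
      using positive_directed_coneD(1)[OF positive_directed_cone_tail_cone[of z n, OF pos]]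
        tail_cone_antimono[of z, OF pos that] by (rule band_restriction_mono[OF \<phi>])
    finally show ?thesis using \<psi>[OF pos] by simp
  qed
  show ?thesis
    using dual_decreasing_to_zero_tail_restrictions[of \<phi> z \<psi>, OF \<phi> pos disj \<psi>_pos \<psi>] le
      by (rule that)
qed

text \<open>The band restrictions \<psi>_N of \<phi> to the tails (z_n)_{n \<ge> N} decrease to 0 in the dual,
  and \<phi> (z_n) \<le> \<psi>_N (z_n) \<le> \<parallel>\<psi>_N\<parallel> M for n \<ge> N.\<close>

lemma disjoint_bounded_tendsto_zero_if_dual_order_continuous:
  fixes \<phi> :: "'a::banach_lattice \<Rightarrow>\<^sub>L real" and z :: "nat \<Rightarrow> 'a"
  assumes OC: "dual_norm_order_continuous TYPE('a)" and \<phi>: "positive_functional \<phi>"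
    and pos: "\<And>n. 0 \<le> z n" and disj: "\<And>i j. i \<noteq> j \<Longrightarrow> inf (z i) (z j) = 0"
    and bnd: "\<And>n. norm (z n) \<le> M"
  shows "(\<lambda>n. \<phi> (z n)) \<longlonglongrightarrow> 0"
proof (rule LIMSEQ_I)
  fix r :: real assume r: "0 < r"
  obtain \<psi> where D: "dual_decreasing_to_zero (range \<psi>)" and le: "\<And>N n. N \<le> n \<Longrightarrow> \<phi> (z n) \<le> \<psi> N (z n)"
    using tail_band_restrictions[of \<phi> z, OF \<phi> pos disj] by blast
  have M: "0 \<le> M" using bnd[of 0] norm_ge_zero[of "z 0"] by linarith
  obtain N where N: "norm (\<psi> N) < r / (M + 1)"
    using OC D r M unfolding dual_norm_order_continuous_iff by fastforce
  have "norm (\<phi> (z n) - 0) < r" if "N \<le> n" for n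
  proof -
    have "0 \<le> \<phi> (z n)" using \<phi> pos unfolding positive_functional_def by simp
    moreover have "\<phi> (z n) \<le> norm (\<psi> N) * norm (z n)"
      using le[OF that] norm_blinfun[of "\<psi> N" "z n"] by simp
    moreover have "norm (\<psi> N) * norm (z n) \<le> r / (M + 1) * M"
      using N bnd M r by (intro mult_mono) auto
    moreover have "r / (M + 1) * M < r" using r M by (simp add: field_simps)
    ultimately show ?thesis by simp
  qed
  then show "\<exists>N. \<forall>n\<ge>N. norm (\<phi> (z n) - 0) < r" by blast
qed

section \<open>Positive operators into \<ell>_1\<close>

lemma partial_sum_choice:
  fixes R :: "nat \<Rightarrow> 'a::comm_monoid_add \<Rightarrow> 'a \<Rightarrow> bool"
  assumes "\<And>n S. \<exists>y. R n S y"
  obtains y where "\<And>n. R n (\<Sum>k<n. y k) (y n)"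
proof -
  define P where "P = (\<lambda>n (S, y). R n S y \<and> (n = 0 \<longrightarrow> S = 0))"
  define Q :: "nat \<Rightarrow> 'a \<times> 'a \<Rightarrow> 'a \<times> 'a \<Rightarrow> bool" where "Q = (\<lambda>n (S, y) (S', y'). S' = S + y)"
  obtain st where st: "\<And>n. P n (st n) \<and> Q n (st n) (st (Suc n))"
    using dependent_nat_choice[of P Q] assms by (auto simp: P_def Q_def split_beta)
  have "fst (st n) = (\<Sum>k<n. snd (st k))" for n
    using st by (induction n) (auto simp: P_def Q_def split_beta)
  then show ?thesis using st that[of "\<lambda>n. snd (st n)"] by (auto simp: P_def split_beta)
qed

lemma positive_l1_operator_dominated:
  fixes T :: "'a::banach_lattice \<Rightarrow> nat \<Rightarrow> real"
  assumes T: "positive_l1_operator T"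
  obtains \<phi> where "positive_functional \<phi>" "\<And>x. l1norm (T x) \<le> \<phi> (lmod x)"
proof -
  have summ: "\<And>x. summable (\<lambda>n. \<bar>T x n\<bar>)" and add: "\<And>x y. T (x + y) = (\<lambda>n. T x n + T y n)"
    and scale: "\<And>c x. T (c *\<^sub>R x) = (\<lambda>n. c * T x n)" and nonneg: "\<And>x n. 0 \<le> x \<Longrightarrow> 0 \<le> T x n"
    using T unfolding positive_l1_operator_def l1_operator_def by blast+
  obtain C where C: "\<And>x. l1norm (T x) \<le> C * norm x"
    using T unfolding positive_l1_operator_def l1_operator_def by blast
  have summ': "summable (T x)" for x by (rule summable_rabs_cancel[OF summ])
  have "bounded_linear (\<lambda>y. suminf (T y))"
  proof (rule bounded_linear_intro)
    show "suminf (T (x + y)) = suminf (T x) + suminf (T y)" for x y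
      unfolding add by (rule suminf_add[OF summ' summ', symmetric])
    show "suminf (T (r *\<^sub>R x)) = r *\<^sub>R suminf (T x)" for r x
      unfolding scale by (simp add: suminf_mult summ')
    show "norm (suminf (T x)) \<le> norm x * C" for x
      using summable_rabs[OF summ, of x] C[of x] unfolding l1norm_def by (simp add: mult.commute)
  qed
  then obtain \<phi> :: "'a \<Rightarrow>\<^sub>L real" where \<phi>: "\<And>y. \<phi> y = suminf (T y)"
    using bounded_linear_Blinfun_apply by metis
  have abs_le: "\<bar>T x n\<bar> \<le> T (lmod x) n" for x n
    using nonneg[of "lmod x - x" n] nonneg[of "lmod x + x" n] le_lmod[of x]
      add_right_mono[OF neg_le_lmod[of x], of x]
    unfolding diff_conv_add_uminus add scale[of "-1", simplified] by (auto simp: add.commute)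
  have "positive_functional \<phi>"
    unfolding positive_functional_def \<phi> using summ' nonneg by (auto intro: suminf_nonneg)
  moreover have "l1norm (T x) \<le> \<phi> (lmod x)" for x
    unfolding l1norm_def \<phi> using abs_le by (intro suminf_le summ summ')
  ultimately show ?thesis using that by blast
qed

lemma uaw_null_selection:
  fixes \<phi> :: "'a::banach_lattice \<Rightarrow>\<^sub>L real" and x :: "nat \<Rightarrow> 'a"
  assumes \<phi>: "positive_functional \<phi>" and x: "uaw_null x"
    and freq: "\<And>N. \<exists>n\<ge>N. d \<le> \<phi> (lmod (x n))"
  obtains Y where "\<And>j. \<exists>n. Y j = lmod (x n)" "\<And>j. d \<le> \<phi> (Y j)"
    "\<And>j. \<phi> (inf (Y j) ((4::real) ^ j *\<^sub>R (\<Sum>k<j. Y k))) < inverse (real (Suc j))"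
proof -
  have "\<exists>Y. (\<exists>n. Y = lmod (x n)) \<and> d \<le> \<phi> Y \<and>
      \<phi> (inf Y ((4::real) ^ j *\<^sub>R S)) < inverse (real (Suc j))" for j S
  proof -
    let ?u = "lmod ((4::real) ^ j *\<^sub>R S)"
    have "(\<lambda>n. \<phi> (inf (lmod (x n)) ?u)) \<longlonglongrightarrow> 0"
      using x lmod_nonneg unfolding uaw_null_def by blast
    then obtain N where N: "\<And>n. N \<le> n \<Longrightarrow> \<phi> (inf (lmod (x n)) ?u) < inverse (real (Suc j))"
      using order_tendstoD(2)[of _ 0 sequentially "inverse (real (Suc j))"]
      unfolding eventually_sequentially by force
    obtain n where n: "N \<le> n" "d \<le> \<phi> (lmod (x n))" using freq by blast
    have "\<phi> (inf (lmod (x n)) ((4::real) ^ j *\<^sub>R S)) \<le> \<phi> (inf (lmod (x n)) ?u)"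
      by (intro positive_functional_mono[OF \<phi>] inf_mono le_lmod order.refl)
    with N[OF n(1)] n(2) show ?thesis by force
  qed
  then obtain Y where "\<And>j. (\<exists>n. Y j = lmod (x n)) \<and> d \<le> \<phi> (Y j) \<and>
      \<phi> (inf (Y j) ((4::real) ^ j *\<^sub>R (\<Sum>k<j. Y k))) < inverse (real (Suc j))"
    by (rule partial_sum_choice[where R = "\<lambda>j S Y. (\<exists>n. Y = lmod (x n)) \<and> d \<le> \<phi> Y \<and>
        \<phi> (inf Y ((4::real) ^ j *\<^sub>R S)) < inverse (real (Suc j))"]) blast
  then show ?thesis using that by blast
qed

lemma uaw_null_tendsto_zero_if_dual_order_continuous:
  fixes \<phi> :: "'a::banach_lattice \<Rightarrow>\<^sub>L real" and x :: "nat \<Rightarrow> 'a"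
  assumes OC: "dual_norm_order_continuous TYPE('a)" and \<phi>: "positive_functional \<phi>"
    and bounded: "bounded (range x)" and x: "uaw_null x"
  shows "(\<lambda>n. \<phi> (lmod (x n))) \<longlonglongrightarrow> 0"
proof (rule ccontr)
  assume "\<not> ?thesis"
  moreover have "0 \<le> \<phi> (lmod (x n))" for n
    using \<phi> lmod_nonneg unfolding positive_functional_def by blast
  ultimately obtain d where d: "0 < d" and freq: "\<And>N. \<exists>n\<ge>N. d \<le> \<phi> (lmod (x n))"
    unfolding LIMSEQ_iff by (force simp: not_less)
  obtain M where M: "\<And>n. norm (x n) \<le> M" using bounded unfolding bounded_iff by blast
  obtain Y where Y: "\<And>j. \<exists>n. Y j = lmod (x n)" and Y_big: "\<And>j. d \<le> \<phi> (Y j)"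
    and Y_small: "\<And>j. \<phi> (inf (Y j) ((4::real) ^ j *\<^sub>R (\<Sum>k<j. Y k))) < inverse (real (Suc j))"
    using uaw_null_selection[OF \<phi> x freq] by blast
  have Y_nonneg: "0 \<le> Y j" and Y_bound: "norm (Y j) \<le> M" for j
    using Y[of j] M lmod_nonneg by auto
  let ?z = "disjoint_part Y"
  have "(\<lambda>j. \<phi> (?z j)) \<longlonglongrightarrow> 0"
    using Y_nonneg Y_bound
    by (intro disjoint_bounded_tendsto_zero_if_dual_order_continuous[OF OC \<phi>, where M = M]
        disjoint_part_nonneg disjoint_part_disjoint[of Y M] norm_disjoint_part_le) auto
  moreover have "d - inverse (real (Suc j)) - (1/2) ^ j * \<phi> (disjoint_weight Y) \<le> \<phi> (?z j)" for j
    using disjoint_part_lower_bound[of Y M \<phi> j, OF Y_nonneg Y_bound \<phi>] Y_big[of j] Y_small[of j]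
    by linarith
  moreover have "(\<lambda>j. d - inverse (real (Suc j)) - (1/2) ^ j * \<phi> (disjoint_weight Y))
      \<longlonglongrightarrow> d - 0 - 0 * \<phi> (disjoint_weight Y)"
    by (intro tendsto_intros LIMSEQ_inverse_real_of_nat LIMSEQ_power_zero) simp
  ultimately have "d \<le> 0" using LIMSEQ_le by fastforce
  with d show False by simp
qed

lemma uaw_DP_if_dual_order_continuous:
  fixes T :: "'a::banach_lattice \<Rightarrow> nat \<Rightarrow> real"
  assumes OC: "dual_norm_order_continuous TYPE('a)" and T: "positive_l1_operator T"
  shows "uaw_DP_l1 T"
  unfolding uaw_DP_l1_def
proof (intro allI impI, elim conjE)
  fix x :: "nat \<Rightarrow> 'a" assume "bounded (range x)" "uaw_null x"
  obtain \<phi> where \<phi>: "positive_functional \<phi>" and le: "\<And>x. l1norm (T x) \<le> \<phi> (lmod x)"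
    using positive_l1_operator_dominated[OF T] by blast
  have summ: "\<And>y. summable (\<lambda>n. \<bar>T y n\<bar>)"
    using T unfolding positive_l1_operator_def l1_operator_def by blast
  show "(\<lambda>n. l1norm (T (x n))) \<longlonglongrightarrow> 0"
  proof (rule tendsto_sandwich[OF _ _ tendsto_const])
    show "\<forall>\<^sub>F n in sequentially. 0 \<le> l1norm (T (x n))"
      unfolding l1norm_def by (simp add: suminf_nonneg summ)
    show "\<forall>\<^sub>F n in sequentially. l1norm (T (x n)) \<le> \<phi> (lmod (x n))" by (simp add: le)
    show "(\<lambda>n. \<phi> (lmod (x n))) \<longlonglongrightarrow> 0"
      using OC \<phi> \<open>bounded (range x)\<close> \<open>uaw_null x\<close>
      by (rule uaw_null_tendsto_zero_if_dual_order_continuous)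
  qed
qed

lemma positive_l1_operator_telescoping:
  fixes F :: "nat \<Rightarrow> ('a::banach_lattice \<Rightarrow>\<^sub>L real)"
  assumes dec: "\<And>n. dual_le (F (Suc n)) (F n)" and pos: "\<And>n. positive_functional (F n)"
  shows "positive_l1_operator (\<lambda>y k. F k y - F (Suc k) y)"
proof -
  define T where "T = (\<lambda>y k. F k y - F (Suc k) y)"
  have T_nonneg: "0 \<le> T v k" if "0 \<le> v" for v k
    using dec[of k] that unfolding T_def dual_le_def by simp
  have T_abs: "\<bar>T y k\<bar> \<le> T (lmod y) k" for y k
    using positive_functional_abs_le[of "F k - F (Suc k)" y] dec[of k]
    unfolding T_def dual_le_iff_positive_functional_diff by (simp add: blinfun.diff_left)
  have partial: "(\<Sum>k<N. T v k) \<le> F 0 v" if "0 \<le> v" for v N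
    using pos[of N] that sum_lessThan_telescope'[of "\<lambda>k. F k v" N]
    unfolding T_def positive_functional_def by simp
  have summ_nonneg: "summable (T v)" if "0 \<le> v" for v
    using T_nonneg[OF that] partial[OF that] by (intro summableI_nonneg_bounded) auto
  have summ: "summable (\<lambda>k. \<bar>T y k\<bar>)" for y
    using T_abs by (intro summable_rabs_comparison_test[OF _ summ_nonneg[OF lmod_nonneg]]) auto
  have "l1norm (T y) \<le> norm (F 0) * norm y" for y
  proof -
    have "l1norm (T y) \<le> (\<Sum>k. T (lmod y) k)" unfolding l1norm_def
      using T_abs summ summ_nonneg[OF lmod_nonneg] by (intro suminf_le) auto
    also have "\<dots> \<le> F 0 (lmod y)"
      using summ_nonneg[OF lmod_nonneg] partial[OF lmod_nonneg] by (intro suminf_le_const) auto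
    also have "\<dots> \<le> norm (F 0) * norm y" using norm_blinfun[of "F 0" "lmod y"] by simp
    finally show ?thesis .
  qed
  then have "\<exists>C. \<forall>y. l1norm (T y) \<le> C * norm y" by blast
  then have "l1_operator T" unfolding l1_operator_def
    using summ by (simp add: T_def blinfun.add_right blinfun.scaleR_right algebra_simps)
  then show ?thesis unfolding positive_l1_operator_def T_def[symmetric] using T_nonneg by blast
qed

lemma dual_decreasing_to_zero_selection:
  fixes D :: "('a::banach_lattice \<Rightarrow>\<^sub>L real) set"
  assumes D: "dual_decreasing_to_zero D" and e: "0 < e" and big: "\<And>f. f \<in> D \<Longrightarrow> e \<le> norm f"
  obtains F X where "\<And>n. F n \<in> D" "\<And>n. dual_le (F (Suc n)) (F n)"
    "\<And>n. 0 \<le> X n" "\<And>n. norm (X n) \<le> 1" "\<And>n. e / 2 < F n (X n)"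
    "\<And>n. F n ((4::real) ^ n *\<^sub>R (\<Sum>k<n. X k)) < inverse (real (Suc n))"
proof -
  have "\<exists>x. 0 \<le> x \<and> norm x \<le> 1 \<and> e / 2 < f x" if "f \<in> D" for f
    using positive_functional_norm_approx[of f "e / 2"] D big[OF that] e that
    unfolding dual_decreasing_to_zero_def dual_le_0_iff by force
  then obtain xs :: "('a \<Rightarrow>\<^sub>L real) \<Rightarrow> 'a" where xs:
    "\<And>f. f \<in> D \<Longrightarrow> 0 \<le> xs f \<and> norm (xs f) \<le> 1 \<and> e / 2 < f (xs f)"
    by metis
  define P where "P = (\<lambda>n (f, S). f \<in> D \<and> 0 \<le> S \<and> (n = 0 \<longrightarrow> S = 0) \<and>
    f ((4::real) ^ n *\<^sub>R S) < inverse (real (Suc n)))"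
  define Q where "Q = (\<lambda>(n::nat) (f, S) (f', S'). dual_le f' f \<and> S' = S + xs f)"
  have "\<exists>st'. P (Suc n) st' \<and> Q n st st'" if "P n st" for n st
  proof -
    obtain f S where st: "st = (f, S)" "f \<in> D" "0 \<le> S" using \<open>P n st\<close> unfolding P_def by auto
    have w: "0 \<le> (4::real) ^ Suc n *\<^sub>R (S + xs f)" using st xs by (simp add: scaleR_nonneg_nonneg)
    have \<eta>: "0 < inverse (real (Suc (Suc n)))" by simp
    obtain g where "g \<in> D" "dual_le g f"
      "g ((4::real) ^ Suc n *\<^sub>R (S + xs f)) < inverse (real (Suc (Suc n)))"
      using dual_decreasing_to_zero_below[OF D st(2) w \<eta>] by blast
    then show ?thesis using st xs unfolding P_def Q_def by (intro exI[of _ "(g, S + xs f)"]) auto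
  qed
  moreover obtain f0 where "f0 \<in> D" using D unfolding dual_decreasing_to_zero_def by blast
  then have "P 0 (f0, 0)" unfolding P_def by simp
  ultimately obtain st where st: "\<And>n. P n (st n) \<and> Q n (st n) (st (Suc n))"
    using dependent_nat_choice[of P Q] by blast
  define F where "F n = fst (st n)" for n
  have "snd (st n) = (\<Sum>k<n. xs (F k))" for n
    using st unfolding P_def Q_def F_def by (induction n) (auto simp: split_beta)
  then show ?thesis
    using st xs unfolding P_def Q_def F_def
      by (intro that[of F "\<lambda>n. xs (F n)"]) (auto simp: split_beta F_def)
qed

lemma dual_le_decreasing_seq:
  assumes "\<And>n. dual_le (F (Suc n)) (F n)" "m \<le> n"
  shows "dual_le (F n) (F m)"
  using assms(2)
proof (induction n rule: dec_induct)
  case base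
  then show ?case by (simp add: dual_le_def)
next
  case (step n)
  then show ?case using assms(1) dual_le_trans by blast
qed

lemma positive_l1_operator_le_l1norm:
  assumes "positive_l1_operator T"
  shows "T x n \<le> l1norm (T x)"
proof -
  have "summable (\<lambda>k. \<bar>T x k\<bar>)" using assms unfolding positive_l1_operator_def l1_operator_def
    by blast
  then have "(\<Sum>k\<in>{n}. \<bar>T x k\<bar>) \<le> l1norm (T x)" unfolding l1norm_def by (intro sum_le_suminf) auto
  then show ?thesis by simp
qed

lemma telescoping_disjoint_part_lower_bound:
  fixes F :: "nat \<Rightarrow> ('a::banach_lattice \<Rightarrow>\<^sub>L real)"
  assumes dec: "\<And>n. dual_le (F (Suc n)) (F n)" and F_pos: "\<And>n. positive_functional (F n)"
    and X_nonneg: "\<And>n. 0 \<le> X n" and X_bound: "\<And>n. norm (X n) \<le> 1"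
    and small: "\<And>n. F n ((4::real) ^ n *\<^sub>R (\<Sum>k<n. X k)) < inverse (real (Suc n))"
  shows "F n (X n) - inverse (real (Suc n)) - (1/2) ^ n * F 0 (disjoint_weight X)
      - inverse (real (Suc (Suc n))) \<le> F n (disjoint_part X n) - F (Suc n) (disjoint_part X n)"
proof -
  let ?W = "\<lambda>n. (4::real) ^ n *\<^sub>R (\<Sum>k<n. X k)"
  have W_nonneg: "0 \<le> ?W n" for n using X_nonneg by (simp add: scaleR_nonneg_nonneg sum_nonneg)
  have "F n (inf (X n) (?W n)) \<le> F n (?W n)" by (intro positive_functional_mono[OF F_pos]) simp
  moreover have "(1/2) ^ n * F n (disjoint_weight X) \<le> (1/2) ^ n * F 0 (disjoint_weight X)"
    using dual_le_decreasing_seq[of F 0 n, OF dec]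
      disjoint_weight_nonneg[of X 1, OF X_nonneg X_bound]
    unfolding dual_le_def by (intro mult_left_mono) simp_all
  moreover have "X n \<le> ?W (Suc n)"
  proof -
    have "X n \<le> (\<Sum>k<Suc n. X k)" using X_nonneg by (intro member_le_sum_nonneg) auto
    also have "\<dots> \<le> ?W (Suc n)"
      using scaleR_right_mono[OF one_le_power[of "4::real" "Suc n"], of "\<Sum>k<Suc n. X k"] X_nonneg
      by (simp add: sum_nonneg)
    finally show ?thesis .
  qed
  then have "F (Suc n) (disjoint_part X n) \<le> F (Suc n) (?W (Suc n))"
    using disjoint_part_le[of X 1, OF X_nonneg X_bound]
    by (intro positive_functional_mono[OF F_pos]) (blast intro: order_trans)
  ultimately show ?thesis
    using disjoint_part_lower_bound[of X 1 "F n" n, OF X_nonneg X_bound F_pos] small[of n]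
      small[of "Suc n"]
    by linarith
qed

lemma dual_order_continuous_if_uaw_DP:
  assumes DP: "\<And>T::'a::banach_lattice \<Rightarrow> nat \<Rightarrow> real. positive_l1_operator T \<Longrightarrow> uaw_DP_l1 T"
  shows "dual_norm_order_continuous TYPE('a)"
  unfolding dual_norm_order_continuous_iff
proof (intro allI impI)
  fix D :: "('a \<Rightarrow>\<^sub>L real) set" and e :: real
  assume D: "dual_decreasing_to_zero D" and e: "0 < e"
  show "\<exists>f\<in>D. norm f < e"
  proof (rule ccontr)
    assume "\<not> ?thesis"
    then have big: "\<And>f. f \<in> D \<Longrightarrow> e \<le> norm f" by (simp add: not_less)
    obtain F X where FD: "\<And>n. F n \<in> D" and dec: "\<And>n. dual_le (F (Suc n)) (F n)"
      and X_nonneg: "\<And>n. 0 \<le> X n" and X_bound: "\<And>n. norm (X n) \<le> 1"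
      and large: "\<And>n. e / 2 < F n (X n)"
      and small: "\<And>n. F n ((4::real) ^ n *\<^sub>R (\<Sum>k<n. X k)) < inverse (real (Suc n))"
      using dual_decreasing_to_zero_selection[OF D e big] by blast
    have F_pos: "positive_functional (F n)" for n
      using D FD unfolding dual_decreasing_to_zero_def dual_le_0_iff by blast
    define T where "T = (\<lambda>y k. F k y - F (Suc k) y)"
    have T: "positive_l1_operator T" unfolding T_def
      by (rule positive_l1_operator_telescoping[of F, OF dec F_pos])
    let ?z = "disjoint_part X"
    have "bounded (range ?z)"
      using norm_disjoint_part_le[of X 1, OF X_nonneg X_bound] by (intro boundedI[of _ 1]) auto
    moreover have "uaw_null ?z"
      using disjoint_part_disjoint[of X 1, OF X_nonneg X_bound]
      by (intro uaw_null_if_disjoint disjoint_part_nonneg)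
    ultimately have "(\<lambda>n. l1norm (T (?z n))) \<longlonglongrightarrow> 0" using DP[OF T] unfolding uaw_DP_l1_def by blast
    moreover have "e / 2 - inverse (real (Suc n)) - (1/2) ^ n * F 0 (disjoint_weight X)
        - inverse (real (Suc (Suc n))) \<le> l1norm (T (?z n))" for n
      using telescoping_disjoint_part_lower_bound[where F = F and X = X and n = n,
          OF dec F_pos X_nonneg X_bound small]
        large[of n] positive_l1_operator_le_l1norm[OF T, of "?z n" n]
      unfolding T_def by linarith
    moreover have "(\<lambda>n. e / 2 - inverse (real (Suc n)) - (1/2) ^ n * F 0 (disjoint_weight X)
        - inverse (real (Suc (Suc n)))) \<longlonglongrightarrow> e / 2 - 0 - 0 * F 0 (disjoint_weight X) - 0"
      by (intro tendsto_intros LIMSEQ_inverse_real_of_nat LIMSEQ_Suc[OF LIMSEQ_inverse_real_of_nat]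
          LIMSEQ_power_zero) simp
    ultimately have "e / 2 \<le> 0" using LIMSEQ_le by fastforce
    with e show False by simp
  qed
qed

theorem theorem3p3:
  shows "(\<forall>T::'a::banach_lattice \<Rightarrow> nat \<Rightarrow> real. positive_l1_operator T \<longrightarrow> uaw_DP_l1 T)
         \<longleftrightarrow> dual_norm_order_continuous TYPE('a)"
  using dual_order_continuous_if_uaw_DP uaw_DP_if_dual_order_continuous by blast

end
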